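(* In the setting described in the context, suppose sequential ignorability, the overlap condition and correct specification hold. Then the backward-induction DTR $\pi^{*,B}=(\pi_1^{*,B},\dots,\pi_T^{*,B})$ is optimal over $\Pi$: $W(\pi^{*,B})\ge W(\pi)$ for all $\pi\in\Pi$.
   Context: Fix $T\ge1$; $\mathcal{A}_t=\{0,\dots,d_t-1\}$, $d_t\ge2$; $\underline v_t=(v_1,\dots,v_t)$, $\underline{\mathcal{A}}_t=\mathcal{A}_1\times\cdots\times\mathcal{A}_t$. Potential outcomes $Y_t(\underline a_t)$, potential states $S_t(\underline a_{t-1})$ ($S_1$ pre-treatment); observed $A_t$, $S_t=S_t(\underline A_{t-1})$, $Y_t=Y_t(\underline A_t)$; potential history $H_t(\underline a_{t-1})=(\underline a_{t-1},S_1,S_2(\underline a_1),\dots,S_t(\underline a_{t-1}))$, observed history $H_t=H_t(\underline A_{t-1})$ with support $\mathcal{H}_t$. $e_t(h_t,a_t)=\mathbb{P}(A_t=a_t\mid H_t=h_t)$. A stage-$t$ policy is measurable $\pi_t:\mathcal{H}_t\to\mathcal{A}_t$; DTR $\pi=(\pi_1,\dots,\pi_T)$; class $\Pi=\Pi_1\times\cdots\times\Pi_T$, $\Pi_{s:t}=\Pi_s\times\cdots\times\Pi_t$, $\pi_{s:t}=(\pi_s,\dots,\pi_t)$. Welfare $W(\pi)=\mathbb{E}[\sum_{t=1}^T\sum_{\underline a_t\in\underline{\mathcal{A}}_t}Y_t(\underline a_t)\prod_{s=1}^t\mathbf{1}\{\pi_s(H_s(\underline a_{s-1}))=a_s\}]$.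 Write $f(h,\pi_t)=f(h,\pi_t(h))$. Q-functions: $Q_T(h_T,a_T)=\mathbb{E}[Y_T\mid H_T=h_T,A_T=a_T]$ (also $Q_T^{\pi_{(T+1):T}}$); for $t<T$, $Q_t^{\pi_{(t+1):T}}(h_t,a_t)=\mathbb{E}[Y_t+Q_{t+1}^{\pi_{(t+2):T}}(H_{t+1},\pi_{t+1})\mid H_t=h_t,A_t=a_t]$. Backward induction: $\pi_T^{*,B}\in\arg\max_{\pi_T\in\Pi_T}\mathbb{E}[Q_T(H_T,\pi_T)]$ and for $t=T-1,\dots,1$, $\pi_t^{*,B}\in\arg\max_{\pi_t\in\Pi_t}\mathbb{E}[Q_t^{\pi^{*,B}_{(t+1):T}}(H_t,\pi_t)]$. (Sequential ignorability) For all $t,\underline a_T$: $\{Y_t(\underline a_t),\dots,Y_T(\underline a_T),S_{t+1}(\underline a_t),\dots,S_T(\underline a_{T-1})\}\perp A_t\mid H_t$. (Overlap) There is $\eta\in(0,1)$ with $e_t(h_t,a_t)\ge\eta$ for all $t$ and $(h_t,a_t)$ such that $\pi_t(h_t)=a_t$ for some $\pi_t\in\Pi_t$. (Correct specification) There is $\pi^*_{2:T}\in\Pi_{2:T}$ with $Q_t^{\pi^*_{(t+1):T}}(H_t,\pi_t^* )\ge\sup_{\pi_t\in\Pi_t}Q_t^{\pi^*_{(t+1):T}}(H_t,\pi_t)$ a.s. for all $t=2,\dots,T$. *)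

theory Defs
  imports "HOL-Probability.Probability"
begin

text \<open>Histories at stage t are pairs (past actions, states):
  the first component is an extensional function on {1..<t} (actions a_1..a_{t-1}),
  the second an extensional function on {1..t} (states S_1..S_t).
  Action sequences (a_1,...,a_t) are lists of length t, a_s = as ! (s-1).\<close>

type_synonym 's hist = "(nat \<Rightarrow> nat) \<times> (nat \<Rightarrow> 's)"

definition act_seqs :: "(nat \<Rightarrow> nat) \<Rightarrow> nat \<Rightarrow> nat list set" where
  "act_seqs d t = {as. length as = t \<and> (\<forall>i<t. as ! i < d (Suc i))}"

definition HM :: "'s measure \<Rightarrow> nat \<Rightarrow> 's hist measure" where
  "HM SM t = PiM {1..<t} (\<lambda>_. count_space UNIV) \<Otimes>\<^sub>M PiM {1..t} (\<lambda>_. SM)"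

definition pot_hist :: "(nat \<Rightarrow> nat list \<Rightarrow> 'w \<Rightarrow> 's) \<Rightarrow> nat \<Rightarrow> nat list \<Rightarrow> 'w \<Rightarrow> 's hist" where
  "pot_hist S t as \<omega> = ((\<lambda>i\<in>{1..<t}. as ! (i - 1)), (\<lambda>i\<in>{1..t}. S i (take (i - 1) as) \<omega>))"

definition obs_acts :: "(nat \<Rightarrow> 'w \<Rightarrow> nat) \<Rightarrow> nat \<Rightarrow> 'w \<Rightarrow> nat list" where
  "obs_acts A t \<omega> = map (\<lambda>s. A s \<omega>) [1..<Suc t]"

definition obs_hist :: "(nat \<Rightarrow> nat list \<Rightarrow> 'w \<Rightarrow> 's) \<Rightarrow> (nat \<Rightarrow> 'w \<Rightarrow> nat) \<Rightarrow> nat \<Rightarrow> 'w \<Rightarrow> 's hist" where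
  "obs_hist S A t \<omega> = pot_hist S t (obs_acts A (t - 1) \<omega>) \<omega>"

definition obs_Y :: "(nat \<Rightarrow> nat list \<Rightarrow> 'w \<Rightarrow> real) \<Rightarrow> (nat \<Rightarrow> 'w \<Rightarrow> nat) \<Rightarrow> nat \<Rightarrow> 'w \<Rightarrow> real" where
  "obs_Y Y A t \<omega> = Y t (obs_acts A t \<omega>) \<omega>"

definition policy :: "'s measure \<Rightarrow> (nat \<Rightarrow> nat) \<Rightarrow> nat \<Rightarrow> ('s hist \<Rightarrow> nat) \<Rightarrow> bool" where
  "policy SM d t p \<longleftrightarrow> p \<in> measurable (HM SM t) (count_space UNIV) \<and> (\<forall>h\<in>space (HM SM t). p h < d t)"

definition H_alg :: "'w measure \<Rightarrow> 's measure \<Rightarrow> (nat \<Rightarrow> nat list \<Rightarrow> 'w \<Rightarrow> 's) \<Rightarrow> (nat \<Rightarrow> 'w \<Rightarrow> nat) \<Rightarrow> nat \<Rightarrow> 'w measure" where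
  "H_alg M SM S A t = vimage_algebra (space M) (obs_hist S A t) (HM SM t)"

definition HA_alg :: "'w measure \<Rightarrow> 's measure \<Rightarrow> (nat \<Rightarrow> nat list \<Rightarrow> 'w \<Rightarrow> 's) \<Rightarrow> (nat \<Rightarrow> 'w \<Rightarrow> nat) \<Rightarrow> nat \<Rightarrow> 'w measure" where
  "HA_alg M SM S A t = vimage_algebra (space M) (\<lambda>\<omega>. (obs_hist S A t \<omega>, A t \<omega>)) (HM SM t \<Otimes>\<^sub>M count_space UNIV)"

definition is_Q_version :: "'w measure \<Rightarrow> 's measure \<Rightarrow> (nat \<Rightarrow> nat list \<Rightarrow> 'w \<Rightarrow> 's) \<Rightarrow> (nat \<Rightarrow> 'w \<Rightarrow> nat)
    \<Rightarrow> nat \<Rightarrow> ('w \<Rightarrow> real) \<Rightarrow> ('s hist \<times> nat \<Rightarrow> real) \<Rightarrow> bool" where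
  "is_Q_version M SM S A t Z q \<longleftrightarrow>
     q \<in> borel_measurable (HM SM t \<Otimes>\<^sub>M count_space UNIV) \<and>
     (AE \<omega> in M. q (obs_hist S A t \<omega>, A t \<omega>) = real_cond_exp M (HA_alg M SM S A t) Z \<omega>)"

definition Q_family :: "'w measure \<Rightarrow> 's measure \<Rightarrow> (nat \<Rightarrow> nat list \<Rightarrow> 'w \<Rightarrow> real) \<Rightarrow> (nat \<Rightarrow> nat list \<Rightarrow> 'w \<Rightarrow> 's)
    \<Rightarrow> (nat \<Rightarrow> 'w \<Rightarrow> nat) \<Rightarrow> nat \<Rightarrow> (nat \<Rightarrow> 's hist \<Rightarrow> nat) \<Rightarrow> (nat \<Rightarrow> 's hist \<times> nat \<Rightarrow> real) \<Rightarrow> bool" where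
  "Q_family M SM Y S A T \<pi> Q \<longleftrightarrow>
     (\<forall>t\<in>{1..T}. is_Q_version M SM S A t
        (if t = T then obs_Y Y A T
         else (\<lambda>\<omega>. obs_Y Y A t \<omega> + Q (Suc t) (obs_hist S A (Suc t) \<omega>, \<pi> (Suc t) (obs_hist S A (Suc t) \<omega>))))
        (Q t))"

definition welfare :: "'w measure \<Rightarrow> (nat \<Rightarrow> nat) \<Rightarrow> (nat \<Rightarrow> nat list \<Rightarrow> 'w \<Rightarrow> real) \<Rightarrow> (nat \<Rightarrow> nat list \<Rightarrow> 'w \<Rightarrow> 's)
    \<Rightarrow> nat \<Rightarrow> (nat \<Rightarrow> 's hist \<Rightarrow> nat) \<Rightarrow> real" where
  "welfare M d Y S T \<pi> =
     (\<integral>\<omega>. (\<Sum>t\<in>{1..T}. \<Sum>as\<in>act_seqs d t.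
        Y t as \<omega> * (\<Prod>s\<in>{1..t}. if \<pi> s (pot_hist S s (take (s - 1) as) \<omega>) = as ! (s - 1) then 1 else 0)) \<partial>M)"

definition cond_indep :: "'w measure \<Rightarrow> 'w measure \<Rightarrow> 'w measure \<Rightarrow> 'w measure \<Rightarrow> bool" where
  "cond_indep M G F1 F2 \<longleftrightarrow>
     (\<forall>E1\<in>sets F1. \<forall>E2\<in>sets F2. AE \<omega> in M.
        real_cond_exp M G (indicator (E1 \<inter> E2)) \<omega> =
        real_cond_exp M G (indicator E1) \<omega> * real_cond_exp M G (indicator E2) \<omega>)"

definition pot_vec :: "(nat \<Rightarrow> nat list \<Rightarrow> 'w \<Rightarrow> real) \<Rightarrow> (nat \<Rightarrow> nat list \<Rightarrow> 'w \<Rightarrow> 's) \<Rightarrow> nat \<Rightarrow> nat \<Rightarrow> nat list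
    \<Rightarrow> 'w \<Rightarrow> (nat \<Rightarrow> real) \<times> (nat \<Rightarrow> 's)" where
  "pot_vec Y S T t as \<omega> = ((\<lambda>s\<in>{t..T}. Y s (take s as) \<omega>), (\<lambda>s\<in>{t<..T}. S s (take (s - 1) as) \<omega>))"

definition seq_ignorability :: "'w measure \<Rightarrow> 's measure \<Rightarrow> (nat \<Rightarrow> nat) \<Rightarrow> (nat \<Rightarrow> nat list \<Rightarrow> 'w \<Rightarrow> real)
    \<Rightarrow> (nat \<Rightarrow> nat list \<Rightarrow> 'w \<Rightarrow> 's) \<Rightarrow> (nat \<Rightarrow> 'w \<Rightarrow> nat) \<Rightarrow> nat \<Rightarrow> bool" where
  "seq_ignorability M SM d Y S A T \<longleftrightarrow>
     (\<forall>t\<in>{1..T}. \<forall>as\<in>act_seqs d T.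
        cond_indep M (H_alg M SM S A t)
          (vimage_algebra (space M) (pot_vec Y S T t as)
             (PiM {t..T} (\<lambda>_. borel) \<Otimes>\<^sub>M PiM {t<..T} (\<lambda>_. SM)))
          (vimage_algebra (space M) (A t) (count_space UNIV)))"

definition overlap :: "'w measure \<Rightarrow> 's measure \<Rightarrow> (nat \<Rightarrow> nat list \<Rightarrow> 'w \<Rightarrow> 's) \<Rightarrow> (nat \<Rightarrow> 'w \<Rightarrow> nat)
    \<Rightarrow> nat \<Rightarrow> (nat \<Rightarrow> ('s hist \<Rightarrow> nat) set) \<Rightarrow> bool" where
  "overlap M SM S A T Pol \<longleftrightarrow>
     (\<exists>\<eta>::real. 0 < \<eta> \<and> \<eta> < 1 \<and>
        (\<forall>t\<in>{1..T}. \<forall>a. AE \<omega> in M.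
           (\<exists>p\<in>Pol t. p (obs_hist S A t \<omega>) = a) \<longrightarrow>
           \<eta> \<le> real_cond_exp M (H_alg M SM S A t) (indicator {x\<in>space M. A t x = a}) \<omega>))"

definition correct_spec :: "'w measure \<Rightarrow> 's measure \<Rightarrow> (nat \<Rightarrow> nat list \<Rightarrow> 'w \<Rightarrow> real) \<Rightarrow> (nat \<Rightarrow> nat list \<Rightarrow> 'w \<Rightarrow> 's)
    \<Rightarrow> (nat \<Rightarrow> 'w \<Rightarrow> nat) \<Rightarrow> nat \<Rightarrow> (nat \<Rightarrow> ('s hist \<Rightarrow> nat) set) \<Rightarrow> bool" where
  "correct_spec M SM Y S A T Pol \<longleftrightarrow>
     (\<exists>\<pi>s Qs. (\<forall>t\<in>{2..T}. \<pi>s t \<in> Pol t) \<and> Q_family M SM Y S A T \<pi>s Qs \<and>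
        (\<forall>t\<in>{2..T}. AE \<omega> in M. \<forall>p\<in>Pol t.
            Qs t (obs_hist S A t \<omega>, p (obs_hist S A t \<omega>))
              \<le> Qs t (obs_hist S A t \<omega>, \<pi>s t (obs_hist S A t \<omega>))))"

definition backward_induction :: "'w measure \<Rightarrow> 's measure \<Rightarrow> (nat \<Rightarrow> nat list \<Rightarrow> 'w \<Rightarrow> real) \<Rightarrow> (nat \<Rightarrow> nat list \<Rightarrow> 'w \<Rightarrow> 's)
    \<Rightarrow> (nat \<Rightarrow> 'w \<Rightarrow> nat) \<Rightarrow> nat \<Rightarrow> (nat \<Rightarrow> ('s hist \<Rightarrow> nat) set)
    \<Rightarrow> (nat \<Rightarrow> 's hist \<Rightarrow> nat) \<Rightarrow> (nat \<Rightarrow> 's hist \<times> nat \<Rightarrow> real) \<Rightarrow> bool" where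
  "backward_induction M SM Y S A T Pol \<pi>B QB \<longleftrightarrow>
     Q_family M SM Y S A T \<pi>B QB \<and>
     (\<forall>t\<in>{1..T}. \<pi>B t \<in> Pol t \<and>
        (\<forall>p\<in>Pol t. (\<integral>\<omega>. QB t (obs_hist S A t \<omega>, p (obs_hist S A t \<omega>)) \<partial>M)
                   \<le> (\<integral>\<omega>. QB t (obs_hist S A t \<omega>, \<pi>B t (obs_hist S A t \<omega>)) \<partial>M)))"

end

theory Submission
  imports Defs
begin

text \<open>
  For a DTR \<open>\<pi>\<close> let \<open>\<rho>\<^sub>t = 1{A\<^sub>t = \<pi>\<^sub>t(H\<^sub>t)} / e\<^sub>t(H\<^sub>t, A\<^sub>t)\<close> and
  \<open>w\<^sub>t = \<rho>\<^sub>1 \<cdots> \<rho>\<^sub>t\<close>; overlap keeps \<open>w\<^sub>t \<le> \<eta>\<^sup>-\<^sup>t\<close>.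
  Sequential ignorability lets one trade, stage by stage, the indicator
  \<open>1{\<pi>\<^sub>s(H\<^sub>s(a\<^sub>s\<^sub>-\<^sub>1)) = a\<^sub>s}\<close> inside \<open>W(\<pi>)\<close> for the observed factor \<open>\<rho>\<^sub>s\<close>;
  this gives the inverse-propensity representation \<open>W(\<pi>) = \<Sum>\<^sub>t E[w\<^sub>t Y\<^sub>t]\<close>.

  Conditioning on \<open>(H\<^sub>t, A\<^sub>t)\<close> and then removing \<open>\<rho>\<^sub>t\<close> by conditioning on \<open>H\<^sub>t\<close>
  gives \<open>E[w\<^sub>t\<^sub>-\<^sub>1 Q\<^sub>t(H\<^sub>t, \<pi>\<^sub>t)] = E[w\<^sub>t Y\<^sub>t] + E[w\<^sub>t Q\<^sub>t\<^sub>+\<^sub>1(H\<^sub>t\<^sub>+\<^sub>1, \<pi>'\<^sub>t\<^sub>+\<^sub>1)]\<close> for the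
  Q-functions of any continuation \<open>\<pi>'\<close>. Telescoping, \<open>W(\<pi>)\<close> equals
  \<open>E[Q\<^sub>1(H\<^sub>1, \<pi>\<^sub>1)]\<close> minus the weighted gaps \<open>E[w\<^sub>t\<^sub>-\<^sub>1 (Q\<^sub>t(H\<^sub>t, \<pi>'\<^sub>t) - Q\<^sub>t(H\<^sub>t, \<pi>\<^sub>t))]\<close>.

  Under correct specification a backward induction shows that the Q-functions of
  \<open>\<pi>\<^sup>*\<^sup>,\<^sup>B\<close> agree a.e. with those of the correctly specified \<open>\<pi>\<^sup>*\<close>: if they agree
  at stage \<open>t\<close> along \<open>(H\<^sub>t, A\<^sub>t)\<close>, overlap transfers the agreement to
  \<open>(H\<^sub>t, p(H\<^sub>t))\<close> for every \<open>p \<in> \<Pi>\<^sub>t\<close>, and then \<open>\<pi>\<^sup>*\<^sub>t\<close> maximising pointwise while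
  \<open>\<pi>\<^sup>*\<^sup>,\<^sup>B\<^sub>t\<close> maximises in mean forces their values to coincide. Hence \<open>\<pi>\<^sup>*\<^sup>,\<^sup>B\<^sub>t\<close> is
  pointwise optimal for \<open>t \<ge> 2\<close>, all gaps for \<open>\<pi>' = \<pi>\<^sup>*\<^sup>,\<^sup>B\<close> are nonnegative, and
  \<open>W(\<pi>) \<le> E[Q\<^sub>1(H\<^sub>1, \<pi>\<^sub>1)] \<le> E[Q\<^sub>1(H\<^sub>1, \<pi>\<^sup>*\<^sup>,\<^sup>B\<^sub>1)] = W(\<pi>\<^sup>*\<^sup>,\<^sup>B)\<close>.
\<close>

lemma length_obs_acts [simp]: "length (obs_acts A k w) = k"
  by (simp add: obs_acts_def)

lemma nth_obs_acts: "i < k \<Longrightarrow> obs_acts A k w ! i = A (Suc i) w"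
  by (simp add: obs_acts_def del: upt_Suc)

lemma take_obs_acts: "j \<le> k \<Longrightarrow> take j (obs_acts A k w) = obs_acts A j w"
  by (rule nth_equalityI) (auto simp: nth_obs_acts)

lemma obs_acts_eq_take:
  assumes "\<forall>s\<in>{1..k}. A s w = as ! (s - 1)" "i \<le> k" "k \<le> length as"
  shows "obs_acts A i w = take i as"
  using assms by (intro nth_equalityI) (auto simp: nth_obs_acts)

lemma obs_hist_eq:
  "obs_hist S A t w = ((\<lambda>i\<in>{1..<t}. A i w), (\<lambda>i\<in>{1..t}. S i (obs_acts A (i - 1) w) w))"
  unfolding obs_hist_def pot_hist_def
  by (auto simp: nth_obs_acts take_obs_acts intro!: ext)

lemma pot_hist_take_eq_obs_hist:
  assumes "\<forall>s\<in>{1..k}. A s w = as ! (s - 1)" "k \<le> length as"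
  shows "pot_hist S (Suc k) (take k as) w = obs_hist S A (Suc k) w"
  unfolding obs_hist_def using obs_acts_eq_take[of k A w as k] assms by simp

lemma obs_hist_restrict:
  "s \<le> t \<Longrightarrow> obs_hist S A s w = (restrict (fst (obs_hist S A t w)) {1..<s}, restrict (snd (obs_hist S A t w)) {1..s})"
  by (auto simp: obs_hist_eq fun_eq_iff)

lemma measurable_hist_restrict:
  "s \<le> t \<Longrightarrow> (\<lambda>h. (restrict (fst h) {1..<s}, restrict (snd h) {1..s})) \<in> measurable (HM SM t) (HM SM s)"
  unfolding HM_def
  by (intro measurable_Pair measurable_restrict measurable_compose[OF measurable_fst measurable_component_singleton]
      measurable_compose[OF measurable_snd measurable_component_singleton]) auto

lemma finite_act_seqs: "finite (act_seqs d k)"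
proof (rule finite_subset)
  show "act_seqs d k \<subseteq> {xs. set xs \<subseteq> {..<(\<Sum>i\<le>k. d i)} \<and> length xs = k}"
  proof
    fix xs assume xs: "xs \<in> act_seqs d k"
    have "x \<in> {..<(\<Sum>i\<le>k. d i)}" if x: "x \<in> set xs" for x
    proof -
      obtain i where i: "i < k" "xs ! i = x" using xs x by (auto simp: act_seqs_def in_set_conv_nth)
      have "d (Suc i) \<le> (\<Sum>i\<le>k. d i)" using i by (intro member_le_sum) auto
      then show ?thesis using xs i by (auto simp: act_seqs_def)
    qed
    then show "xs \<in> {xs. set xs \<subseteq> {..<(\<Sum>i\<le>k. d i)} \<and> length xs = k}"
      using xs by (auto simp: act_seqs_def)
  qed
qed (rule finite_lists_length_eq, simp)

lemma take_in_act_seqs: "as \<in> act_seqs d k \<Longrightarrow> j \<le> k \<Longrightarrow> take j as \<in> act_seqs d j"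
  by (auto simp: act_seqs_def)

lemma subalgebra_vimage_algebra:
  "f \<in> measurable M N \<Longrightarrow> subalgebra M (vimage_algebra (space M) f N)"
  unfolding subalgebra_def using sets_image_in_sets[of M "space M" f N] by auto

lemma measurable_vimage_algebra_mono:
  assumes "f \<in> measurable (vimage_algebra X g N) L" "h \<in> measurable (vimage_algebra X f L) K"
  shows "h \<in> measurable (vimage_algebra X g N) K"
proof -
  have "sets (vimage_algebra X f L) \<subseteq> sets (vimage_algebra X g N)"
    by (rule sets_image_in_sets[OF _ assms(1)]) simp
  then show ?thesis using assms(2) measurable_mono[of K K "vimage_algebra X f L" "vimage_algebra X g N"] by auto
qed

lemma sets_Collect_eq_count_space:
  fixes f g :: "'a \<Rightarrow> 'b::countable"
  assumes "f \<in> measurable N (count_space UNIV)" "g \<in> measurable N (count_space UNIV)"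
  shows "{w \<in> space N. f w = g w} \<in> sets N"
proof -
  have "{w \<in> space N. f w = g w} = {w \<in> space N. \<exists>i. f w = i \<and> g w = i}" by auto
  also have "\<dots> \<in> sets N" using assms by measurable
  finally show ?thesis .
qed

lemma integrable_bounded_mult:
  fixes f g :: "'a \<Rightarrow> real"
  assumes "integrable M f" "g \<in> borel_measurable M" "\<And>w. w \<in> space M \<Longrightarrow> \<bar>g w\<bar> \<le> B"
  shows "integrable M (\<lambda>w. g w * f w)"
proof (rule Bochner_Integration.integrable_bound[where f="\<lambda>w. B * f w"])
  show "AE w in M. norm (g w * f w) \<le> norm (B * f w)"
  proof (rule AE_I2)
    fix w assume "w \<in> space M"
    then have "\<bar>g w\<bar> \<le> \<bar>B\<bar>" using assms(3) by (meson abs_ge_self order_trans)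
    then have "\<bar>g w\<bar> * \<bar>f w\<bar> \<le> \<bar>B\<bar> * \<bar>f w\<bar>" by (rule mult_right_mono) simp
    then show "norm (g w * f w) \<le> norm (B * f w)" by (simp add: abs_mult)
  qed
qed (use assms in auto)

lemma (in sigma_finite_subalgebra) nn_integral_mult_indicator_cond_exp:
  assumes X: "X \<in> borel_measurable F" and E: "E \<in> sets M"
  shows "(\<integral>\<^sup>+w. X w * ennreal (indicator E w) \<partial>M)
       = (\<integral>\<^sup>+w. X w * ennreal (real_cond_exp M F (indicator E) w) \<partial>M)"
proof -
  let ?g = "\<lambda>w. ennreal (indicator E w :: real)"
  have gm: "?g \<in> borel_measurable M" using E by measurable
  have neg: "(\<lambda>w. ennreal (- indicator E w :: real)) = (\<lambda>w. 0)"
    by (intro ext ennreal_neg) simp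
  have "AE w in M. (0::ennreal) = nn_cond_exp M F (\<lambda>w. 0) w"
    and "AE w in M. (1::ennreal) = nn_cond_exp M F (\<lambda>w. 1) w"
    by (rule nn_cond_exp_F_meas, simp)+
  moreover have "AE w in M. nn_cond_exp M F ?g w \<le> nn_cond_exp M F (\<lambda>w. 1) w"
    using gm by (intro nn_cond_exp_mono) (auto simp: indicator_def)
  ultimately have "AE w in M. nn_cond_exp M F ?g w = ennreal (real_cond_exp M F (indicator E) w)"
  proof eventually_elim
    case (elim w)
    then have "nn_cond_exp M F ?g w < top" by (metis ennreal_one_less_top le_less_trans)
    then show ?case unfolding real_cond_exp_def neg using elim
      by (simp add: ennreal_enn2real_if less_top[symmetric])
  qed
  then have "(\<integral>\<^sup>+w. X w * nn_cond_exp M F ?g w \<partial>M)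
      = (\<integral>\<^sup>+w. X w * ennreal (real_cond_exp M F (indicator E) w) \<partial>M)"
    by (intro nn_integral_cong_AE) auto
  then show ?thesis using nn_cond_exp_intg[OF X gm] by simp
qed

lemma (in finite_measure_subalgebra) integral_cond_indep_reweight:
  fixes K r :: "'a \<Rightarrow> real"
  assumes K: "K \<in> borel_measurable F" "\<And>w. w \<in> space M \<Longrightarrow> \<bar>K w\<bar> \<le> B"
    and r: "r \<in> borel_measurable F" "\<And>w. w \<in> space M \<Longrightarrow> \<bar>r w\<bar> \<le> C"
    and E: "E1 \<in> sets M" "E2 \<in> sets M"
    and ci: "AE w in M. real_cond_exp M F (indicator (E1 \<inter> E2)) w
                      = real_cond_exp M F (indicator E1) w * real_cond_exp M F (indicator E2) w"
    and inv: "AE w in M. K w \<noteq> 0 \<longrightarrow> r w * real_cond_exp M F (indicator E2) w = 1"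
  shows "(\<integral>w. K w * r w * indicator (E1 \<inter> E2) w \<partial>M) = (\<integral>w. K w * indicator E1 w \<partial>M)"
proof -
  have [measurable]: "K \<in> borel_measurable M" "r \<in> borel_measurable M"
    using K(1) r(1) by (auto intro: measurable_from_subalg[OF subalg])
  have "integrable M (\<lambda>w. K w * r w * indicator (E1 \<inter> E2) w)"
  proof (rule integrable_const_bound[where B="B * C"])
    show "AE w in M. norm (K w * r w * indicator (E1 \<inter> E2) w) \<le> B * C"
      using K(2) r(2) by (intro AE_I2) (force simp: abs_mult indicator_def intro: mult_mono)
  qed (use E in measurable)
  then have "(\<integral>w. K w * r w * indicator (E1 \<inter> E2) w \<partial>M)
      = (\<integral>w. K w * r w * real_cond_exp M F (indicator (E1 \<inter> E2)) w \<partial>M)"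
    by (intro real_cond_exp_intg(2)[symmetric]) (use K r E in measurable)
  also have "\<dots> = (\<integral>w. K w * real_cond_exp M F (indicator E1) w \<partial>M)"
    by (intro integral_cong_AE) (use ci inv in \<open>measurable, auto\<close>)
  also have "\<dots> = (\<integral>w. K w * indicator E1 w \<partial>M)"
  proof (rule real_cond_exp_intg(2))
    show "integrable M (\<lambda>w. K w * indicator E1 w)"
    proof (rule integrable_const_bound[where B=B])
      show "AE w in M. norm (K w * indicator E1 w) \<le> B"
        using K(2) by (intro AE_I2) (fastforce simp: indicator_def)
    qed (use K E in measurable)
  qed (use K E in measurable)
  finally show ?thesis .
qed

lemma (in finite_measure) emeasure_distr_density_bounded:
  fixes g :: "'a \<Rightarrow> real"
  assumes \<Phi>: "\<Phi> \<in> measurable M N" and g: "g \<in> borel_measurable M" "\<And>w. w \<in> space M \<Longrightarrow> 0 \<le> g w \<and> g w \<le> c"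
    and P: "P \<in> sets N"
  shows "emeasure (distr (density M g) N \<Phi>) P = ennreal (\<integral>w. g w * indicator P (\<Phi> w) \<partial>M)"
proof -
  have "emeasure (distr (density M g) N \<Phi>) P = emeasure (density M g) (\<Phi> -` P \<inter> space M)"
    by (subst emeasure_distr) (use \<Phi> P in auto)
  also have "\<dots> = (\<integral>\<^sup>+w. ennreal (g w) * indicator (\<Phi> -` P \<inter> space M) w \<partial>M)"
    by (rule emeasure_density) (use g \<Phi> P in measurable)
  also have "\<dots> = (\<integral>\<^sup>+w. ennreal (g w * indicator P (\<Phi> w)) \<partial>M)"
    by (rule nn_integral_cong) (auto simp: indicator_def)
  also have "\<dots> = ennreal (\<integral>w. g w * indicator P (\<Phi> w) \<partial>M)"
  proof (rule nn_integral_eq_integral)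
    show "integrable M (\<lambda>w. g w * indicator P (\<Phi> w))"
    proof (rule integrable_const_bound[where B=c])
      show "AE w in M. norm (g w * indicator P (\<Phi> w)) \<le> c"
        using g(2) by (intro AE_I2) (fastforce simp: indicator_def)
    qed (use g \<Phi> P in measurable)
  qed (use g in \<open>auto simp: indicator_def\<close>)
  finally show ?thesis .
qed

lemma (in finite_measure) integral_density_eq_if_eq_on_rectangles:
  fixes \<Phi> :: "'a \<Rightarrow> 'b \<times> 'c" and g1 g2 :: "'a \<Rightarrow> real"
  assumes \<Phi>: "\<Phi> \<in> measurable M (N1 \<Otimes>\<^sub>M N2)"
    and g: "g1 \<in> borel_measurable M" "g2 \<in> borel_measurable M"
    and bnd: "\<And>w. w \<in> space M \<Longrightarrow> 0 \<le> g1 w \<and> g1 w \<le> c1"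
      "\<And>w. w \<in> space M \<Longrightarrow> 0 \<le> g2 w \<and> g2 w \<le> c2"
    and rect: "\<And>X Z. X \<in> sets N1 \<Longrightarrow> Z \<in> sets N2 \<Longrightarrow>
      (\<integral>w. g1 w * indicator (X \<times> Z) (\<Phi> w) \<partial>M) = (\<integral>w. g2 w * indicator (X \<times> Z) (\<Phi> w) \<partial>M)"
    and f: "f \<in> borel_measurable (N1 \<Otimes>\<^sub>M N2)"
  shows "(\<integral>w. g1 w * f (\<Phi> w) \<partial>M) = (\<integral>w. g2 w * f (\<Phi> w) \<partial>M)"
proof -
  let ?N = "N1 \<Otimes>\<^sub>M N2" and ?G = "{X \<times> Z |X Z. X \<in> sets N1 \<and> Z \<in> sets N2}"
  note law = emeasure_distr_density_bounded[OF \<Phi>]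
  have laws_eq: "distr (density M g1) ?N \<Phi> = distr (density M g2) ?N \<Phi>"
  proof (rule measure_eqI_generator_eq[OF Int_stable_pair_measure_generator[of N1 N2]])
    show "?G \<subseteq> Pow (space N1 \<times> space N2)" by (auto dest: sets.sets_into_space)
    show "sets (distr (density M g1) ?N \<Phi>) = sigma_sets (space N1 \<times> space N2) ?G"
      and "sets (distr (density M g2) ?N \<Phi>) = sigma_sets (space N1 \<times> space N2) ?G"
      by (simp_all add: sets_pair_measure)
    show "range (\<lambda>i::nat. space N1 \<times> space N2) \<subseteq> ?G" by auto
    show "(\<Union>i::nat. space N1 \<times> space N2) = space N1 \<times> space N2" by simp
    show "emeasure (distr (density M g1) ?N \<Phi>) (space N1 \<times> space N2) \<noteq> \<infinity>" for i :: nat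
      using law[OF g(1) bnd(1) sets.top] by (simp add: space_pair_measure)
  next
    fix P assume "P \<in> ?G"
    then obtain X Z where "P = X \<times> Z" "X \<in> sets N1" "Z \<in> sets N2" by auto
    then show "emeasure (distr (density M g1) ?N \<Phi>) P = emeasure (distr (density M g2) ?N \<Phi>) P"
      using law[OF g(1) bnd(1)] law[OF g(2) bnd(2)] rect by simp
  qed
  have integral_law: "(\<integral>w. g w * f (\<Phi> w) \<partial>M) = (\<integral>x. f x \<partial>distr (density M g) ?N \<Phi>)"
    if "g \<in> borel_measurable M" "\<And>w. w \<in> space M \<Longrightarrow> 0 \<le> g w \<and> g w \<le> c" for g c
    by (subst integral_distr) (use \<Phi> f that in \<open>auto simp: integral_density\<close>)
  have "(\<integral>w. g1 w * f (\<Phi> w) \<partial>M) = (\<integral>x. f x \<partial>distr (density M g1) ?N \<Phi>)"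
    by (rule integral_law[OF g(1) bnd(1)])
  also have "\<dots> = (\<integral>x. f x \<partial>distr (density M g2) ?N \<Phi>)" by (simp only: laws_eq)
  also have "\<dots> = (\<integral>w. g2 w * f (\<Phi> w) \<partial>M)" by (rule integral_law[OF g(2) bnd(2), symmetric])
  finally show ?thesis .
qed

section \<open>The sequential decision model\<close>

locale dtr =
  fixes M :: "'w measure" and SM :: "'s measure" and T :: nat and d :: "nat \<Rightarrow> nat"
    and Y :: "nat \<Rightarrow> nat list \<Rightarrow> 'w \<Rightarrow> real"
    and S :: "nat \<Rightarrow> nat list \<Rightarrow> 'w \<Rightarrow> 's"
    and A :: "nat \<Rightarrow> 'w \<Rightarrow> nat"
    and Pol :: "nat \<Rightarrow> ('s hist \<Rightarrow> nat) set"
    and \<eta> :: real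
  assumes prob: "prob_space M"
    and T_ge_1: "1 \<le> T"
    and measurable_A: "\<And>t. t \<in> {1..T} \<Longrightarrow> A t \<in> measurable M (count_space UNIV)"
    and A_less: "\<And>t w. t \<in> {1..T} \<Longrightarrow> w \<in> space M \<Longrightarrow> A t w < d t"
    and measurable_S: "\<And>t as. t \<in> {1..T} \<Longrightarrow> as \<in> act_seqs d (t - 1) \<Longrightarrow> S t as \<in> measurable M SM"
    and integrable_Y: "\<And>t as. t \<in> {1..T} \<Longrightarrow> as \<in> act_seqs d t \<Longrightarrow> integrable M (Y t as)"
    and Pol_policies: "\<And>t. t \<in> {1..T} \<Longrightarrow> Pol t \<subseteq> {p. policy SM d t p}"
    and eta_pos: "0 < \<eta>"
    and overlap_at: "\<And>t a. t \<in> {1..T} \<Longrightarrow> AE w in M. (\<exists>p\<in>Pol t. p (obs_hist S A t w) = a) \<longrightarrow>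
           \<eta> \<le> real_cond_exp M (H_alg M SM S A t) (indicator {x\<in>space M. A t x = a}) w"
    and ignorability: "seq_ignorability M SM d Y S A T"
begin

sublocale prob_space M by (rule prob)

abbreviation "H t \<equiv> obs_hist S A t"
abbreviation "FH t \<equiv> H_alg M SM S A t"
abbreviation "FHA t \<equiv> HA_alg M SM S A t"

abbreviation "e t a \<equiv> real_cond_exp M (FH t) (indicator {x\<in>space M. A t x = a})"

lemma sets_A_eq: "t \<in> {1..T} \<Longrightarrow> {w \<in> space M. A t w = a} \<in> sets M"
  using pred_count_space_const1[OF measurable_A] by (simp add: pred_def)

lemma obs_acts_in_act_seqs: "k \<le> T \<Longrightarrow> w \<in> space M \<Longrightarrow> obs_acts A k w \<in> act_seqs d k"
  unfolding act_seqs_def using A_less by (auto simp: nth_obs_acts)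

lemma measurable_obs_acts:
  assumes "k \<le> T"
  shows "obs_acts A k \<in> measurable M (count_space (act_seqs d k))"
  unfolding measurable_count_space_eq_countable[OF countable_finite[OF finite_act_seqs]]
proof safe
  fix w assume "w \<in> space M"
  then show "obs_acts A k w \<in> act_seqs d k" using assms by (intro obs_acts_in_act_seqs)
next
  fix as assume "as \<in> act_seqs d k"
  then have "obs_acts A k -` {as} \<inter> space M = {w \<in> space M. \<forall>i\<in>{..<k}. A (Suc i) w = as ! i}"
    by (auto simp: act_seqs_def list_eq_iff_nth_eq nth_obs_acts)
  also have "\<dots> \<in> sets M"
    using assms by (intro sets.sets_Collect_finite_All sets_A_eq) auto
  finally show "obs_acts A k -` {as} \<inter> space M \<in> sets M" .
qed

lemma measurable_H: "t \<le> T \<Longrightarrow> H t \<in> measurable M (HM SM t)"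
proof -
  assume t: "t \<le> T"
  have "H t = (\<lambda>w. ((\<lambda>i\<in>{1..<t}. A i w), (\<lambda>i\<in>{1..t}. S i (obs_acts A (i - 1) w) w)))"
    by (rule ext) (rule obs_hist_eq)
  also have "\<dots> \<in> measurable M (HM SM t)"
    unfolding HM_def
  proof (intro measurable_Pair measurable_restrict)
    fix i assume "i \<in> {1..<t}"
    then show "A i \<in> measurable M (count_space UNIV)" using t by (intro measurable_A) auto
  next
    fix i assume i: "i \<in> {1..t}"
    show "(\<lambda>w. S i (obs_acts A (i - 1) w) w) \<in> measurable M SM"
    proof (rule measurable_compose_countable'[OF _ measurable_obs_acts])
      show "S i as \<in> measurable M SM" if "as \<in> act_seqs d (i - 1)" for as
        using that t i by (intro measurable_S) auto
    qed (use t i in \<open>auto intro: countable_finite finite_act_seqs\<close>)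
  qed
  finally show ?thesis .
qed

lemma measurable_pot_hist:
  assumes "t \<le> T" "as \<in> act_seqs d (t - 1)"
  shows "pot_hist S t as \<in> measurable M (HM SM t)"
proof -
  have "pot_hist S t as = (\<lambda>w. ((\<lambda>i\<in>{1..<t}. as ! (i - 1)), (\<lambda>i\<in>{1..t}. S i (take (i - 1) as) w)))"
    by (auto simp: pot_hist_def fun_eq_iff)
  also have "\<dots> \<in> measurable M (HM SM t)"
    unfolding HM_def
  proof (intro measurable_Pair measurable_const measurable_restrict)
    fix i assume "i \<in> {1..t}"
    then show "S i (take (i - 1) as) \<in> measurable M SM"
      using assms by (intro measurable_S take_in_act_seqs[of _ _ "t - 1"]) auto
  qed (simp add: space_PiM)
  finally show ?thesis .
qed

lemma measurable_H_A: "t \<in> {1..T} \<Longrightarrow> (\<lambda>w. (H t w, A t w)) \<in> measurable M (HM SM t \<Otimes>\<^sub>M count_space UNIV)"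
  by (intro measurable_Pair measurable_H measurable_A) auto

lemma finite_measure_subalgebra_FH: "t \<le> T \<Longrightarrow> finite_measure_subalgebra M (FH t)"
  unfolding H_alg_def
  by (intro finite_measure_subalgebra.intro finite_measure_subalgebra_axioms.intro
      finite_measure_axioms subalgebra_vimage_algebra measurable_H)

lemma finite_measure_subalgebra_FHA: "t \<in> {1..T} \<Longrightarrow> finite_measure_subalgebra M (FHA t)"
  unfolding HA_alg_def
  by (intro finite_measure_subalgebra.intro finite_measure_subalgebra_axioms.intro
      finite_measure_axioms subalgebra_vimage_algebra measurable_H_A)

lemma measurable_FH_M: "t \<le> T \<Longrightarrow> f \<in> measurable (FH t) N \<Longrightarrow> f \<in> measurable M N"
  using finite_measure_subalgebra.subalg[OF finite_measure_subalgebra_FH] by (rule measurable_from_subalg)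

lemma measurable_FHA_M: "t \<in> {1..T} \<Longrightarrow> f \<in> measurable (FHA t) N \<Longrightarrow> f \<in> measurable M N"
  using finite_measure_subalgebra.subalg[OF finite_measure_subalgebra_FHA] by (rule measurable_from_subalg)

lemma measurable_H_FH: "t \<le> T \<Longrightarrow> H t \<in> measurable (FH t) (HM SM t)"
  unfolding H_alg_def
  by (intro measurable_vimage_algebra1) (use measurable_space[OF measurable_H] in auto)

lemma measurable_H_A_FHA: "t \<in> {1..T} \<Longrightarrow> (\<lambda>w. (H t w, A t w)) \<in> measurable (FHA t) (HM SM t \<Otimes>\<^sub>M count_space UNIV)"
  unfolding HA_alg_def
  by (intro measurable_vimage_algebra1) (use measurable_space[OF measurable_H_A] in auto)

lemma measurable_A_FHA: "t \<in> {1..T} \<Longrightarrow> A t \<in> measurable (FHA t) (count_space UNIV)"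
  using measurable_compose[OF measurable_H_A_FHA measurable_snd] by simp

lemma measurable_FH_FHA:
  assumes "t \<in> {1..T}" "f \<in> measurable (FH t) N"
  shows "f \<in> measurable (FHA t) N"
proof -
  have "H t \<in> measurable (FHA t) (HM SM t)"
    using measurable_compose[OF measurable_H_A_FHA[OF assms(1)] measurable_fst] by simp
  then show ?thesis
    using assms(2) unfolding H_alg_def HA_alg_def by (rule measurable_vimage_algebra_mono)
qed

lemma measurable_H_FH_mono:
  assumes "s \<le> t" "t \<le> T"
  shows "H s \<in> measurable (FH t) (HM SM s)"
proof -
  have "H s = (\<lambda>w. (restrict (fst (H t w)) {1..<s}, restrict (snd (H t w)) {1..s}))"
    by (intro ext obs_hist_restrict[OF assms(1)])
  then show ?thesis
    using measurable_compose[OF measurable_H_FH[OF assms(2)] measurable_hist_restrict[OF assms(1)]] by simp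
qed

lemma measurable_FH_mono: "s \<le> t \<Longrightarrow> t \<le> T \<Longrightarrow> f \<in> measurable (FH s) N \<Longrightarrow> f \<in> measurable (FH t) N"
  unfolding H_alg_def by (rule measurable_vimage_algebra_mono[OF measurable_H_FH_mono[unfolded H_alg_def]])

lemma measurable_A_FH: "1 \<le> s \<Longrightarrow> s < t \<Longrightarrow> t \<le> T \<Longrightarrow> A s \<in> measurable (FH t) (count_space UNIV)"
proof -
  assume st: "1 \<le> s" "s < t" "t \<le> T"
  have "(\<lambda>w. fst (H t w) s) \<in> measurable (FH t) (count_space UNIV)"
    by (rule measurable_compose[OF measurable_H_FH]) (use st in \<open>auto simp: HM_def
        intro!: measurable_compose[OF measurable_fst measurable_component_singleton]\<close>)
  moreover have "(\<lambda>w. fst (H t w) s) = A s"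
    using st by (auto simp: obs_hist_eq)
  ultimately show ?thesis by simp
qed

lemma measurable_policy: "t \<in> {1..T} \<Longrightarrow> p \<in> Pol t \<Longrightarrow> p \<in> measurable (HM SM t) (count_space UNIV)"
  using Pol_policies by (auto simp: policy_def)

lemma policy_H_less: "t \<in> {1..T} \<Longrightarrow> p \<in> Pol t \<Longrightarrow> w \<in> space M \<Longrightarrow> p (H t w) < d t"
  using Pol_policies measurable_space[OF measurable_H] by (fastforce simp: policy_def)

lemma measurable_policy_H_FH:
  "t \<in> {1..T} \<Longrightarrow> p \<in> Pol t \<Longrightarrow> (\<lambda>w. p (H t w)) \<in> measurable (FH t) (count_space UNIV)"
  by (rule measurable_compose[OF measurable_H_FH measurable_policy]) auto

lemma measurable_q_H_FH:
  assumes "t \<le> T" "q \<in> borel_measurable (HM SM t \<Otimes>\<^sub>M count_space UNIV)"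
    and "g \<in> measurable (FH t) (count_space UNIV)"
  shows "(\<lambda>w. q (H t w, g w)) \<in> borel_measurable (FH t)"
  by (rule measurable_compose[OF measurable_Pair[OF measurable_H_FH] assms(2)]) (use assms in auto)

lemma overlap_AE_all:
  "t \<in> {1..T} \<Longrightarrow> AE w in M. \<forall>a. (\<exists>p\<in>Pol t. p (H t w) = a) \<longrightarrow> \<eta> \<le> e t a w"
  by (subst AE_all_countable) (auto intro: overlap_at)

lemma overlap_AE_policy: "t \<in> {1..T} \<Longrightarrow> p \<in> Pol t \<Longrightarrow> AE w in M. \<eta> \<le> e t (p (H t w)) w"
  using overlap_AE_all by (rule AE_mp) (auto intro!: AE_I2)

text \<open>On \<open>{p(H\<^sub>t) = a}\<close> overlap gives \<open>e\<^sub>t(H\<^sub>t, a) \<ge> \<eta>\<close>, so integrating against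
  \<open>1{A\<^sub>t = a}\<close> instead loses at most a factor \<open>1/\<eta>\<close>.\<close>

lemma nn_integral_policy_action_le:
  fixes g :: "'s hist \<times> nat \<Rightarrow> ennreal"
  assumes t: "t \<in> {1..T}" and p: "p \<in> Pol t" and g: "g \<in> borel_measurable (HM SM t \<Otimes>\<^sub>M count_space UNIV)"
  shows "(\<integral>\<^sup>+w. (if p (H t w) = a then g (H t w, a) else 0) \<partial>M) \<le> ennreal (1 / \<eta>) * (\<integral>\<^sup>+w. g (H t w, A t w) \<partial>M)"
proof -
  interpret F: finite_measure_subalgebra M "FH t" using t by (intro finite_measure_subalgebra_FH) auto
  have tT: "t \<le> T" using t by auto
  define X where "X w = (if p (H t w) = a then g (H t w, a) else 0)" for w
  have "(\<lambda>w. g (H t w, a)) \<in> borel_measurable (FH t)" by (rule measurable_q_H_FH[OF tT g]) simp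
  moreover have "{w \<in> space (FH t). p (H t w) = a} \<in> sets (FH t)"
    using measurable_policy_H_FH[OF t p] by measurable
  ultimately have X: "X \<in> borel_measurable (FH t)" unfolding X_def by measurable
  have "(\<integral>\<^sup>+w. X w \<partial>M) \<le> (\<integral>\<^sup>+w. ennreal (1 / \<eta>) * (X w * ennreal (e t a w)) \<partial>M)"
    using overlap_AE_all[OF t]
  proof (intro nn_integral_mono_AE, eventually_elim)
    case (elim w)
    show ?case
    proof (cases "p (H t w) = a")
      case True
      then have "1 \<le> (1 / \<eta>) * e t a w" using elim p eta_pos by (auto simp: field_simps)
      then have "ennreal 1 \<le> ennreal (1 / \<eta>) * ennreal (e t a w)"
        using eta_pos by (simp add: ennreal_mult[symmetric] del: ennreal_1)
      then have "X w * 1 \<le> X w * (ennreal (1 / \<eta>) * ennreal (e t a w))"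
        by (intro mult_left_mono) auto
      then show ?thesis by (simp add: mult_ac)
    qed (simp add: X_def)
  qed
  also have "\<dots> = ennreal (1 / \<eta>) * (\<integral>\<^sup>+w. X w * ennreal (indicator {x\<in>space M. A t x = a} w) \<partial>M)"
    using measurable_FH_M[OF tT X] sets_A_eq[OF t]
    by (simp add: nn_integral_cmult F.nn_integral_mult_indicator_cond_exp[OF X])
  also have "\<dots> \<le> ennreal (1 / \<eta>) * (\<integral>\<^sup>+w. g (H t w, A t w) \<partial>M)"
    by (intro mult_left_mono nn_integral_mono) (auto simp: X_def indicator_def)
  finally show ?thesis unfolding X_def .
qed

lemma nn_integral_policy_le_nn_integral_A:
  fixes g :: "'s hist \<times> nat \<Rightarrow> ennreal"
  assumes t: "t \<in> {1..T}" and p: "p \<in> Pol t" and g: "g \<in> borel_measurable (HM SM t \<Otimes>\<^sub>M count_space UNIV)"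
  shows "(\<integral>\<^sup>+w. g (H t w, p (H t w)) \<partial>M) \<le> of_nat (d t) * (ennreal (1 / \<eta>) * (\<integral>\<^sup>+w. g (H t w, A t w) \<partial>M))"
proof -
  have tT: "t \<le> T" using t by auto
  have meas: "(\<lambda>w. if p (H t w) = a then g (H t w, a) else 0) \<in> borel_measurable M" for a
  proof -
    have "(\<lambda>w. g (H t w, a)) \<in> borel_measurable M"
      by (intro measurable_FH_M[OF tT measurable_q_H_FH[OF tT g]]) simp
    moreover have "{w \<in> space M. p (H t w) = a} \<in> sets M"
      using measurable_FH_M[OF tT measurable_policy_H_FH[OF t p]] by measurable
    ultimately show ?thesis by measurable
  qed
  have "(\<integral>\<^sup>+w. g (H t w, p (H t w)) \<partial>M) = (\<integral>\<^sup>+w. (\<Sum>a<d t. if p (H t w) = a then g (H t w, a) else 0) \<partial>M)"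
    using policy_H_less[OF t p] by (intro nn_integral_cong) (simp add: sum.delta)
  also have "\<dots> = (\<Sum>a<d t. \<integral>\<^sup>+w. (if p (H t w) = a then g (H t w, a) else 0) \<partial>M)"
    by (rule nn_integral_sum) (use meas in auto)
  also have "\<dots> \<le> (\<Sum>a<d t. ennreal (1 / \<eta>) * (\<integral>\<^sup>+w. g (H t w, A t w) \<partial>M))"
    by (intro sum_mono nn_integral_policy_action_le[OF t p g])
  finally show ?thesis by simp
qed

lemma integrable_at_policy:
  assumes t: "t \<in> {1..T}" and q: "(q :: 's hist \<times> nat \<Rightarrow> real) \<in> borel_measurable (HM SM t \<Otimes>\<^sub>M count_space UNIV)"
    and qA: "integrable M (\<lambda>w. q (H t w, A t w))" and p: "p \<in> Pol t"
  shows "integrable M (\<lambda>w. q (H t w, p (H t w)))"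
  unfolding integrable_iff_bounded
proof
  show "(\<lambda>w. q (H t w, p (H t w))) \<in> borel_measurable M"
    by (rule measurable_FH_M[OF _ measurable_q_H_FH[OF _ q measurable_policy_H_FH[OF t p]]]) (use t in auto)
  have "(\<integral>\<^sup>+w. ennreal (norm (q (H t w, A t w))) \<partial>M) < \<infinity>"
    using qA by (simp add: integrable_iff_bounded)
  then have "of_nat (d t) * (ennreal (1 / \<eta>) * (\<integral>\<^sup>+w. ennreal (norm (q (H t w, A t w))) \<partial>M)) < \<infinity>"
    by (simp add: ennreal_mult_less_top of_nat_less_top)
  then show "(\<integral>\<^sup>+w. ennreal (norm (q (H t w, p (H t w)))) \<partial>M) < \<infinity>"
    using nn_integral_policy_le_nn_integral_A[OF t p, of "\<lambda>x. ennreal (norm (q x))"] q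
    by (auto intro: le_less_trans)
qed

lemma AE_eq_at_policy:
  assumes t: "t \<in> {1..T}"
    and q: "(q1 :: 's hist \<times> nat \<Rightarrow> real) \<in> borel_measurable (HM SM t \<Otimes>\<^sub>M count_space UNIV)"
      "(q2 :: 's hist \<times> nat \<Rightarrow> real) \<in> borel_measurable (HM SM t \<Otimes>\<^sub>M count_space UNIV)"
    and eq: "AE w in M. q1 (H t w, A t w) = q2 (H t w, A t w)" and p: "p \<in> Pol t"
  shows "AE w in M. q1 (H t w, p (H t w)) = q2 (H t w, p (H t w))"
proof -
  let ?g = "\<lambda>x. ennreal \<bar>q1 x - q2 x\<bar>"
  have "(\<integral>\<^sup>+w. ?g (H t w, A t w) \<partial>M) = 0"
    using eq by (subst nn_integral_cong_AE[where v="\<lambda>_. 0"]) (auto elim: AE_mp)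
  then have "(\<integral>\<^sup>+w. ?g (H t w, p (H t w)) \<partial>M) = 0"
    using nn_integral_policy_le_nn_integral_A[OF t p, of ?g] q by simp
  moreover have "(\<lambda>w. q (H t w, p (H t w))) \<in> borel_measurable M" if "q \<in> borel_measurable (HM SM t \<Otimes>\<^sub>M count_space UNIV)" for q
    by (rule measurable_FH_M[OF _ measurable_q_H_FH[OF _ that measurable_policy_H_FH[OF t p]]]) (use t in auto)
  then have "(\<lambda>w. ?g (H t w, p (H t w))) \<in> borel_measurable M" using q by measurable
  ultimately have "AE w in M. ?g (H t w, p (H t w)) = 0" by (simp add: nn_integral_0_iff_AE)
  then show ?thesis by eventually_elim simp
qed

lemma integrable_obs_Y: assumes t: "t \<in> {1..T}" shows "integrable M (obs_Y Y A t)"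
proof -
  have tT: "t \<le> T" using t by auto
  let ?Y = "\<lambda>w. \<Sum>as\<in>act_seqs d t. indicator {x \<in> space M. obs_acts A t x = as} w * Y t as w"
  have "integrable M ?Y"
  proof (intro Bochner_Integration.integrable_sum integrable_bounded_mult[where B=1] integrable_Y[OF t])
    fix as assume "as \<in> act_seqs d t"
    then have "{x \<in> space M. obs_acts A t x = as} \<in> sets M"
      using measurable_sets[OF measurable_obs_acts[OF tT], of "{as}"] by (simp add: vimage_def Int_def conj_commute)
    then show "indicator {x \<in> space M. obs_acts A t x = as} \<in> borel_measurable M" by measurable
  qed auto
  moreover have "integrable M ?Y \<longleftrightarrow> integrable M (obs_Y Y A t)"
  proof (rule Bochner_Integration.integrable_cong[OF refl])
    fix w assume "w \<in> space M"
    then show "?Y w = obs_Y Y A t w"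
      using obs_acts_in_act_seqs[OF tT] finite_act_seqs
      by (simp add: obs_Y_def indicator_def if_distrib[of "\<lambda>x. x * _"] sum.delta cong: if_cong)
  qed
  ultimately show ?thesis by simp
qed

section \<open>Inverse-propensity weights and Q-functions\<close>

text \<open>The reciprocal propensity is truncated below \<open>\<eta>\<close> to keep the weights bounded;
  by overlap the truncation is inactive a.e. at every action some policy in \<open>\<Pi>\<^sub>t\<close> can take.\<close>

definition inv_propensity :: "nat \<Rightarrow> nat \<Rightarrow> 'w \<Rightarrow> real" where
  "inv_propensity t a w = (if \<eta> \<le> e t a w then 1 / e t a w else 0)"

definition ipw_factor :: "nat \<Rightarrow> ('s hist \<Rightarrow> nat) \<Rightarrow> 'w \<Rightarrow> real" where
  "ipw_factor t p w = (if A t w = p (H t w) then inv_propensity t (p (H t w)) w else 0)"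

definition ipw_weight :: "(nat \<Rightarrow> 's hist \<Rightarrow> nat) \<Rightarrow> nat \<Rightarrow> 'w \<Rightarrow> real" where
  "ipw_weight \<pi> t w = (\<Prod>s\<in>{1..t}. ipw_factor s (\<pi> s) w)"

definition ipw_value :: "(nat \<Rightarrow> 's hist \<Rightarrow> nat) \<Rightarrow> real" where
  "ipw_value \<pi> = (\<Sum>t\<in>{1..T}. \<integral>w. ipw_weight \<pi> t w * obs_Y Y A t w \<partial>M)"

lemma inv_propensity_bounds: "0 \<le> inv_propensity t a w" "inv_propensity t a w \<le> 1 / \<eta>"
  using eta_pos by (auto simp: inv_propensity_def field_simps)

lemma inv_propensity_mult_e: "\<eta> \<le> e t a w \<Longrightarrow> inv_propensity t a w * e t a w = 1"
  using eta_pos by (simp add: inv_propensity_def)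

lemma ipw_factor_bounds: "0 \<le> ipw_factor t p w" "ipw_factor t p w \<le> 1 / \<eta>"
  using inv_propensity_bounds eta_pos by (auto simp: ipw_factor_def)

lemma ipw_weight_bounds: "0 \<le> ipw_weight \<pi> t w" "ipw_weight \<pi> t w \<le> (1 / \<eta>) ^ t"
proof -
  show "0 \<le> ipw_weight \<pi> t w" unfolding ipw_weight_def by (intro prod_nonneg) (auto intro: ipw_factor_bounds)
  have "ipw_weight \<pi> t w \<le> (\<Prod>s\<in>{1..t}. 1 / \<eta>)"
    unfolding ipw_weight_def by (intro prod_mono) (auto intro: ipw_factor_bounds)
  then show "ipw_weight \<pi> t w \<le> (1 / \<eta>) ^ t" by simp
qed

lemma abs_ipw_weight_le: "\<bar>ipw_weight \<pi> t w\<bar> \<le> (1 / \<eta>) ^ t"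
  using ipw_weight_bounds by auto

lemma ipw_weight_0 [simp]: "ipw_weight \<pi> 0 w = 1"
  by (simp add: ipw_weight_def)

lemma ipw_weight_Suc: "ipw_weight \<pi> (Suc t) w = ipw_weight \<pi> t w * ipw_factor (Suc t) (\<pi> (Suc t)) w"
  by (simp add: ipw_weight_def prod.cl_ivl_Suc)

lemma measurable_inv_propensity_policy:
  assumes "t \<in> {1..T}" "p \<in> Pol t"
  shows "(\<lambda>w. inv_propensity t (p (H t w)) w) \<in> borel_measurable (FH t)"
  by (rule measurable_compose_countable[OF _ measurable_policy_H_FH[OF assms]])
    (simp add: inv_propensity_def[abs_def])

lemma measurable_ipw_factor_FHA:
  assumes t: "t \<in> {1..T}" and p: "p \<in> Pol t"
  shows "ipw_factor t p \<in> borel_measurable (FHA t)"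
proof -
  have "{w \<in> space (FHA t). A t w = p (H t w)} \<in> sets (FHA t)"
    by (intro sets_Collect_eq_count_space measurable_A_FHA measurable_FH_FHA measurable_policy_H_FH t p)
  then show ?thesis
    unfolding ipw_factor_def[abs_def]
    using measurable_FH_FHA[OF t measurable_inv_propensity_policy[OF t p]] by measurable
qed

lemma measurable_ipw_factor_FH:
  assumes "1 \<le> s" "s < t" "t \<le> T" and p: "p \<in> Pol s"
  shows "ipw_factor s p \<in> borel_measurable (FH t)"
proof -
  have s: "s \<in> {1..T}" using assms by auto
  have "{w \<in> space (FH t). A s w = p (H s w)} \<in> sets (FH t)"
    using assms by (intro sets_Collect_eq_count_space measurable_A_FH measurable_FH_mono[OF _ _ measurable_policy_H_FH[OF s p]]) auto
  moreover have "(\<lambda>w. inv_propensity s (p (H s w)) w) \<in> borel_measurable (FH t)"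
    using assms by (intro measurable_FH_mono[OF _ _ measurable_inv_propensity_policy[OF s p]]) auto
  ultimately show ?thesis unfolding ipw_factor_def[abs_def] by measurable
qed

lemma measurable_ipw_weight_FH:
  "t < t' \<Longrightarrow> t' \<le> T \<Longrightarrow> \<forall>s\<in>{1..T}. \<pi> s \<in> Pol s \<Longrightarrow> ipw_weight \<pi> t \<in> borel_measurable (FH t')"
  unfolding ipw_weight_def[abs_def] by (intro borel_measurable_prod measurable_ipw_factor_FH) auto

lemma measurable_ipw_weight_FHA:
  assumes t: "t \<in> {1..T}" and \<pi>: "\<forall>s\<in>{1..T}. \<pi> s \<in> Pol s"
  shows "ipw_weight \<pi> t \<in> borel_measurable (FHA t)"
proof -
  obtain k where k: "t = Suc k" using t by (cases t) auto
  have "ipw_weight \<pi> k \<in> borel_measurable (FHA t)"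
    using k t \<pi> by (intro measurable_FH_FHA measurable_ipw_weight_FH) auto
  moreover have "ipw_factor t (\<pi> t) \<in> borel_measurable (FHA t)"
    using t \<pi> by (intro measurable_ipw_factor_FHA) auto
  ultimately show ?thesis unfolding k ipw_weight_Suc[abs_def] by measurable
qed

lemma measurable_ipw_weight:
  assumes "t \<le> T" "\<forall>s\<in>{1..T}. \<pi> s \<in> Pol s"
  shows "ipw_weight \<pi> t \<in> borel_measurable M"
proof (cases "t = 0")
  case False
  then show ?thesis using assms by (intro measurable_FHA_M[OF _ measurable_ipw_weight_FHA]) auto
qed (simp add: ipw_weight_def[abs_def])

definition Q_target :: "(nat \<Rightarrow> 's hist \<Rightarrow> nat) \<Rightarrow> (nat \<Rightarrow> 's hist \<times> nat \<Rightarrow> real) \<Rightarrow> nat \<Rightarrow> 'w \<Rightarrow> real" where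
  "Q_target \<pi>' Q t = (if t = T then obs_Y Y A T
      else (\<lambda>w. obs_Y Y A t w + Q (Suc t) (H (Suc t) w, \<pi>' (Suc t) (H (Suc t) w))))"

lemma Q_familyD:
  assumes "Q_family M SM Y S A T \<pi>' Q" "t \<in> {1..T}"
  shows "Q t \<in> borel_measurable (HM SM t \<Otimes>\<^sub>M count_space UNIV)"
    and "AE w in M. Q t (H t w, A t w) = real_cond_exp M (FHA t) (Q_target \<pi>' Q t) w"
  using assms unfolding Q_family_def is_Q_version_def Q_target_def by auto

lemma measurable_Q_at_A:
  assumes "Q_family M SM Y S A T \<pi>' Q" "t \<in> {1..T}"
  shows "(\<lambda>w. Q t (H t w, A t w)) \<in> borel_measurable M"
  using measurable_compose[OF measurable_H_A Q_familyD(1)[OF assms]] assms(2) by simp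

lemma measurable_Q_at_policy_FH:
  assumes "Q_family M SM Y S A T \<pi>' Q" "t \<in> {1..T}" "p \<in> Pol t"
  shows "(\<lambda>w. Q t (H t w, p (H t w))) \<in> borel_measurable (FH t)"
  using assms by (intro measurable_q_H_FH Q_familyD(1) measurable_policy_H_FH) auto

lemma measurable_Q_at_policy:
  assumes "Q_family M SM Y S A T \<pi>' Q" "t \<in> {1..T}" "p \<in> Pol t"
  shows "(\<lambda>w. Q t (H t w, p (H t w))) \<in> borel_measurable M"
  using assms by (intro measurable_FH_M[OF _ measurable_Q_at_policy_FH]) auto

lemma integrable_Q_at_A_if_target:
  assumes Q: "Q_family M SM Y S A T \<pi>' Q" and t: "t \<in> {1..T}"
    and Z: "integrable M (Q_target \<pi>' Q t)"
  shows "integrable M (\<lambda>w. Q t (H t w, A t w))"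
proof -
  interpret F: finite_measure_subalgebra M "FHA t" by (rule finite_measure_subalgebra_FHA[OF t])
  show ?thesis
    using F.real_cond_exp_int(1)[OF Z] measurable_Q_at_A[OF Q t]
    by (rule integrable_cong_AE_imp) (use Q_familyD(2)[OF Q t] in \<open>auto elim: AE_mp\<close>)
qed

lemma integrable_Q_target:
  assumes \<pi>': "\<forall>s\<in>{2..T}. \<pi>' s \<in> Pol s" and Q: "Q_family M SM Y S A T \<pi>' Q" and t: "t \<in> {1..T}"
  shows "integrable M (Q_target \<pi>' Q t)"
proof -
  have "t \<le> T" using t by auto
  then show ?thesis
  proof (induction rule: inc_induct)
    case base
    show ?case using integrable_obs_Y[of T] T_ge_1 by (simp add: Q_target_def)
  next
    case (step n)
    have n: "n \<in> {1..T}" and sn: "Suc n \<in> {1..T}" using step.hyps t by auto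
    have "integrable M (\<lambda>w. Q (Suc n) (H (Suc n) w, \<pi>' (Suc n) (H (Suc n) w)))"
      using integrable_Q_at_A_if_target[OF Q sn step.IH] \<pi>' n sn
      by (intro integrable_at_policy[OF sn Q_familyD(1)[OF Q sn]]) auto
    then show ?case using integrable_obs_Y[OF n] step.hyps by (simp add: Q_target_def)
  qed
qed

lemma integrable_Q_at_policy:
  assumes "\<forall>s\<in>{2..T}. \<pi>' s \<in> Pol s" "Q_family M SM Y S A T \<pi>' Q" "t \<in> {1..T}" "p \<in> Pol t"
  shows "integrable M (\<lambda>w. Q t (H t w, p (H t w)))"
  using assms integrable_Q_at_A_if_target[OF assms(2,3) integrable_Q_target[OF assms(1-3)]]
  by (intro integrable_at_policy Q_familyD(1)) auto

lemma integral_policy_indicator_eq_propensity: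
  assumes t: "t \<in> {1..T}" and p: "p \<in> Pol t" and K: "K \<in> borel_measurable (FH t)" "integrable M K"
  shows "(\<integral>w. (if A t w = p (H t w) then K w else 0) \<partial>M) = (\<integral>w. K w * e t (p (H t w)) w \<partial>M)"
proof -
  interpret F: finite_measure_subalgebra M "FH t" using t by (intro finite_measure_subalgebra_FH) auto
  define KI where "KI a w = K w * (if p (H t w) = a then 1 else 0)" for a w
  let ?A = "\<lambda>a. indicator {x\<in>space M. A t x = a} :: 'w \<Rightarrow> real"
  have KI: "KI a \<in> borel_measurable (FH t)" for a
  proof -
    have "{w \<in> space (FH t). p (H t w) = a} \<in> sets (FH t)" using measurable_policy_H_FH[OF t p] by measurable
    then show ?thesis unfolding KI_def[abs_def] using K(1) by measurable
  qed
  have KIA: "integrable M (\<lambda>w. KI a w * ?A a w)" for a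
  proof -
    have "integrable M (\<lambda>w. ((if p (H t w) = a then 1 else 0) * ?A a w) * K w)"
      by (rule integrable_bounded_mult[OF K(2), where B=1])
        (use measurable_FH_M[OF _ KI, of a] K(1) sets_A_eq[OF t] t measurable_FH_M[OF _ measurable_policy_H_FH[OF t p]]
          in \<open>measurable, auto simp: indicator_def\<close>)
    then show ?thesis by (simp add: KI_def mult_ac)
  qed
  have "(\<integral>w. (if A t w = p (H t w) then K w else 0) \<partial>M) = (\<integral>w. (\<Sum>a<d t. KI a w * ?A a w) \<partial>M)"
  proof (rule Bochner_Integration.integral_cong[OF refl])
    fix w assume w: "w \<in> space M"
    have "(\<Sum>a<d t. KI a w * ?A a w) = (\<Sum>a<d t. if a = p (H t w) then (if A t w = a then K w else 0) else 0)"
      using w by (intro sum.cong) (auto simp: KI_def indicator_def)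
    then show "(if A t w = p (H t w) then K w else 0) = (\<Sum>a<d t. KI a w * ?A a w)"
      using policy_H_less[OF t p w] by simp
  qed
  also have "\<dots> = (\<Sum>a<d t. \<integral>w. KI a w * ?A a w \<partial>M)"
    by (rule Bochner_Integration.integral_sum) (rule KIA)
  also have "\<dots> = (\<Sum>a<d t. \<integral>w. KI a w * e t a w \<partial>M)"
    using measurable_A[OF t] by (intro sum.cong refl F.real_cond_exp_intg(2)[OF KIA KI, symmetric]) measurable
  also have "\<dots> = (\<integral>w. (\<Sum>a<d t. KI a w * e t a w) \<partial>M)"
    using measurable_A[OF t]
    by (intro Bochner_Integration.integral_sum[symmetric] F.real_cond_exp_intg(1)[OF KIA KI]) measurable
  also have "\<dots> = (\<integral>w. K w * e t (p (H t w)) w \<partial>M)"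
  proof (rule Bochner_Integration.integral_cong[OF refl])
    fix w assume w: "w \<in> space M"
    have "(\<Sum>a<d t. KI a w * e t a w) = (\<Sum>a<d t. if a = p (H t w) then K w * e t a w else 0)"
      by (intro sum.cong) (auto simp: KI_def)
    then show "(\<Sum>a<d t. KI a w * e t a w) = K w * e t (p (H t w)) w"
      using policy_H_less[OF t p w] by simp
  qed
  finally show ?thesis .
qed

lemma integral_ipw_weight_at_A:
  assumes \<pi>: "\<forall>s\<in>{1..T}. \<pi> s \<in> Pol s" and t: "t \<in> {1..T}"
    and q: "q \<in> borel_measurable (HM SM t \<Otimes>\<^sub>M count_space UNIV)"
    and qi: "integrable M (\<lambda>w. q (H t w, \<pi> t (H t w)))"
  shows "(\<integral>w. ipw_weight \<pi> t w * q (H t w, A t w) \<partial>M)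
       = (\<integral>w. ipw_weight \<pi> (t - 1) w * q (H t w, \<pi> t (H t w)) \<partial>M)"
proof -
  have tT: "t \<le> T" and pt: "\<pi> t \<in> Pol t" using t \<pi> by auto
  obtain k where k: "t = Suc k" using t by (cases t) auto
  define K where "K w = ipw_weight \<pi> k w * inv_propensity t (\<pi> t (H t w)) w * q (H t w, \<pi> t (H t w))" for w
  have wk: "ipw_weight \<pi> k \<in> borel_measurable (FH t)"
    using k tT \<pi> by (intro measurable_ipw_weight_FH) auto
  have K: "K \<in> borel_measurable (FH t)"
    unfolding K_def[abs_def]
    using wk measurable_inv_propensity_policy[OF t pt] measurable_q_H_FH[OF tT q measurable_policy_H_FH[OF t pt]]
    by measurable
  have "integrable M (\<lambda>w. (ipw_weight \<pi> k w * inv_propensity t (\<pi> t (H t w)) w) * q (H t w, \<pi> t (H t w)))"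
  proof (rule integrable_bounded_mult[OF qi, where B="(1 / \<eta>) ^ k * (1 / \<eta>)"])
    show "(\<lambda>w. ipw_weight \<pi> k w * inv_propensity t (\<pi> t (H t w)) w) \<in> borel_measurable M"
      using measurable_FH_M[OF tT wk] measurable_FH_M[OF tT measurable_inv_propensity_policy[OF t pt]] by measurable
    show "\<bar>ipw_weight \<pi> k w * inv_propensity t (\<pi> t (H t w)) w\<bar> \<le> (1 / \<eta>) ^ k * (1 / \<eta>)" for w
      unfolding abs_mult using abs_ipw_weight_le inv_propensity_bounds eta_pos by (intro mult_mono) auto
  qed
  then have Ki: "integrable M K" by (simp add: K_def[abs_def])
  have "(\<integral>w. ipw_weight \<pi> t w * q (H t w, A t w) \<partial>M) = (\<integral>w. (if A t w = \<pi> t (H t w) then K w else 0) \<partial>M)"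
    by (intro Bochner_Integration.integral_cong) (auto simp: k ipw_weight_Suc ipw_factor_def K_def)
  also have "\<dots> = (\<integral>w. K w * e t (\<pi> t (H t w)) w \<partial>M)"
    by (rule integral_policy_indicator_eq_propensity[OF t pt K Ki])
  also have "\<dots> = (\<integral>w. ipw_weight \<pi> k w * q (H t w, \<pi> t (H t w)) \<partial>M)"
  proof (rule integral_cong_AE)
    show "AE w in M. K w * e t (\<pi> t (H t w)) w = ipw_weight \<pi> k w * q (H t w, \<pi> t (H t w))"
      using overlap_AE_policy[OF t pt] by eventually_elim (simp add: K_def inv_propensity_mult_e)
  next
    have "(\<lambda>w. e t (\<pi> t (H t w)) w) \<in> borel_measurable M"
      by (rule measurable_compose_countable[OF _ measurable_FH_M[OF tT measurable_policy_H_FH[OF t pt]]]) simp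
    then show "(\<lambda>w. K w * e t (\<pi> t (H t w)) w) \<in> borel_measurable M"
      using measurable_FH_M[OF tT K] by measurable
    show "(\<lambda>w. ipw_weight \<pi> k w * q (H t w, \<pi> t (H t w))) \<in> borel_measurable M"
      using measurable_FH_M[OF tT wk] borel_measurable_integrable[OF qi] by measurable
  qed
  finally show ?thesis by (simp add: k)
qed

lemma integral_ipw_weight_Q_at_A:
  assumes \<pi>: "\<forall>s\<in>{1..T}. \<pi> s \<in> Pol s" and \<pi>': "\<forall>s\<in>{2..T}. \<pi>' s \<in> Pol s"
    and Q: "Q_family M SM Y S A T \<pi>' Q" and t: "t \<in> {1..T}"
  shows "(\<integral>w. ipw_weight \<pi> t w * Q t (H t w, A t w) \<partial>M) = (\<integral>w. ipw_weight \<pi> t w * Q_target \<pi>' Q t w \<partial>M)"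
proof -
  interpret F: finite_measure_subalgebra M "FHA t" by (rule finite_measure_subalgebra_FHA[OF t])
  have w: "ipw_weight \<pi> t \<in> borel_measurable (FHA t)" by (rule measurable_ipw_weight_FHA[OF t \<pi>])
  have Z: "integrable M (Q_target \<pi>' Q t)" by (rule integrable_Q_target[OF \<pi>' Q t])
  have "(\<integral>w. ipw_weight \<pi> t w * Q t (H t w, A t w) \<partial>M)
      = (\<integral>w. ipw_weight \<pi> t w * real_cond_exp M (FHA t) (Q_target \<pi>' Q t) w \<partial>M)"
    using Q_familyD(2)[OF Q t] measurable_Q_at_A[OF Q t] measurable_FHA_M[OF t w]
    by (intro integral_cong_AE) (measurable, auto elim: AE_mp)
  also have "\<dots> = (\<integral>w. ipw_weight \<pi> t w * Q_target \<pi>' Q t w \<partial>M)"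
  proof (rule F.real_cond_exp_intg(2)[OF _ w])
    show "integrable M (\<lambda>w. ipw_weight \<pi> t w * Q_target \<pi>' Q t w)"
      by (rule integrable_bounded_mult[OF Z measurable_FHA_M[OF t w] abs_ipw_weight_le])
  qed (use Z in auto)
  finally show ?thesis .
qed

lemma ipw_Q_recursion:
  assumes \<pi>: "\<forall>s\<in>{1..T}. \<pi> s \<in> Pol s" and \<pi>': "\<forall>s\<in>{2..T}. \<pi>' s \<in> Pol s"
    and Q: "Q_family M SM Y S A T \<pi>' Q" and t: "t \<in> {1..T}"
  shows "(\<integral>w. ipw_weight \<pi> (t - 1) w * Q t (H t w, \<pi> t (H t w)) \<partial>M) =
     (\<integral>w. ipw_weight \<pi> t w * obs_Y Y A t w \<partial>M) +
     (if t < T then (\<integral>w. ipw_weight \<pi> t w * Q (Suc t) (H (Suc t) w, \<pi>' (Suc t) (H (Suc t) w)) \<partial>M) else 0)"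
proof -
  have w: "ipw_weight \<pi> t \<in> borel_measurable M" using t \<pi> by (intro measurable_ipw_weight) auto
  have "(\<integral>w. ipw_weight \<pi> (t - 1) w * Q t (H t w, \<pi> t (H t w)) \<partial>M)
      = (\<integral>w. ipw_weight \<pi> t w * Q t (H t w, A t w) \<partial>M)"
    using t \<pi> by (intro integral_ipw_weight_at_A[OF \<pi> t Q_familyD(1)[OF Q t], symmetric]
        integrable_Q_at_policy[OF \<pi>' Q t]) auto
  also have "\<dots> = (\<integral>w. ipw_weight \<pi> t w * Q_target \<pi>' Q t w \<partial>M)"
    by (rule integral_ipw_weight_Q_at_A[OF \<pi> \<pi>' Q t])
  also have "\<dots> = (\<integral>w. ipw_weight \<pi> t w * obs_Y Y A t w \<partial>M) +
     (if t < T then (\<integral>w. ipw_weight \<pi> t w * Q (Suc t) (H (Suc t) w, \<pi>' (Suc t) (H (Suc t) w)) \<partial>M) else 0)"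
  proof (cases "t < T")
    case True
    then have "Suc t \<in> {1..T}" "\<pi>' (Suc t) \<in> Pol (Suc t)" using t \<pi>' by auto
    then have "integrable M (\<lambda>w. ipw_weight \<pi> t w * Q (Suc t) (H (Suc t) w, \<pi>' (Suc t) (H (Suc t) w)))"
      by (intro integrable_bounded_mult[OF integrable_Q_at_policy[OF \<pi>' Q] w abs_ipw_weight_le])
    moreover have "integrable M (\<lambda>w. ipw_weight \<pi> t w * obs_Y Y A t w)"
      by (rule integrable_bounded_mult[OF integrable_obs_Y[OF t] w abs_ipw_weight_le])
    ultimately show ?thesis using True by (simp add: Q_target_def distrib_left)
  qed (use t in \<open>simp add: Q_target_def\<close>)
  finally show ?thesis .
qed

lemma ipw_value_telescope:
  assumes \<pi>: "\<forall>s\<in>{1..T}. \<pi> s \<in> Pol s" and \<pi>': "\<forall>s\<in>{2..T}. \<pi>' s \<in> Pol s"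
    and Q: "Q_family M SM Y S A T \<pi>' Q"
  shows "ipw_value \<pi> + (\<Sum>t\<in>{2..T}. (\<integral>w. ipw_weight \<pi> (t - 1) w * Q t (H t w, \<pi>' t (H t w)) \<partial>M)
                                    - (\<integral>w. ipw_weight \<pi> (t - 1) w * Q t (H t w, \<pi> t (H t w)) \<partial>M))
       = (\<integral>w. Q 1 (H 1 w, \<pi> 1 (H 1 w)) \<partial>M)"
proof -
  define gap where "gap t = (\<integral>w. ipw_weight \<pi> (t - 1) w * Q t (H t w, \<pi>' t (H t w)) \<partial>M)
                          - (\<integral>w. ipw_weight \<pi> (t - 1) w * Q t (H t w, \<pi> t (H t w)) \<partial>M)" for t
  have "(\<Sum>u\<in>{i..T}. \<integral>w. ipw_weight \<pi> u w * obs_Y Y A u w \<partial>M) + (\<Sum>t\<in>{Suc i..T}. gap t)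
      = (\<integral>w. ipw_weight \<pi> (i - 1) w * Q i (H i w, \<pi> i (H i w)) \<partial>M)" if i: "1 \<le> i" "i \<le> T" for i
    using i(2)
  proof (induction rule: inc_induct)
    case base
    show ?case using ipw_Q_recursion[OF \<pi> \<pi>' Q, of T] T_ge_1 by simp
  next
    case (step n)
    have n: "n \<in> {1..T}" using step.hyps i(1) by auto
    have "(\<Sum>u\<in>{n..T}. \<integral>w. ipw_weight \<pi> u w * obs_Y Y A u w \<partial>M)
        = (\<integral>w. ipw_weight \<pi> n w * obs_Y Y A n w \<partial>M) + (\<Sum>u\<in>{Suc n..T}. \<integral>w. ipw_weight \<pi> u w * obs_Y Y A u w \<partial>M)"
      using n by (simp add: sum.atLeast_Suc_atMost)
    moreover have "(\<Sum>t\<in>{Suc n..T}. gap t) = gap (Suc n) + (\<Sum>t\<in>{Suc (Suc n)..T}. gap t)"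
      using step.hyps by (simp add: sum.atLeast_Suc_atMost)
    ultimately show ?case
      using step.IH ipw_Q_recursion[OF \<pi> \<pi>' Q n] step.hyps by (simp add: gap_def)
  qed
  from this[of 1] show ?thesis using T_ge_1 by (simp add: ipw_value_def gap_def numeral_2_eq_2)
qed

lemma ipw_value_eq_Q1:
  assumes "\<forall>s\<in>{1..T}. \<pi> s \<in> Pol s" "Q_family M SM Y S A T \<pi> Q"
  shows "ipw_value \<pi> = (\<integral>w. Q 1 (H 1 w, \<pi> 1 (H 1 w)) \<partial>M)"
  using ipw_value_telescope[of \<pi> \<pi> Q] assms by simp

lemma ipw_value_le_Q1:
  assumes \<pi>: "\<forall>s\<in>{1..T}. \<pi> s \<in> Pol s" and \<pi>': "\<forall>s\<in>{2..T}. \<pi>' s \<in> Pol s"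
    and Q: "Q_family M SM Y S A T \<pi>' Q"
    and le: "\<forall>t\<in>{2..T}. AE w in M. Q t (H t w, \<pi> t (H t w)) \<le> Q t (H t w, \<pi>' t (H t w))"
  shows "ipw_value \<pi> \<le> (\<integral>w. Q 1 (H 1 w, \<pi> 1 (H 1 w)) \<partial>M)"
proof -
  have "(\<integral>w. ipw_weight \<pi> (t - 1) w * Q t (H t w, \<pi> t (H t w)) \<partial>M)
      \<le> (\<integral>w. ipw_weight \<pi> (t - 1) w * Q t (H t w, \<pi>' t (H t w)) \<partial>M)" if t: "t \<in> {2..T}" for t
  proof (rule integral_mono_AE)
    have t1: "t \<in> {1..T}" and w: "ipw_weight \<pi> (t - 1) \<in> borel_measurable M"
      using t \<pi> by (auto intro: measurable_ipw_weight)
    have "integrable M (\<lambda>w. ipw_weight \<pi> (t - 1) w * Q t (H t w, p (H t w)))" if "p \<in> Pol t" for p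
      by (rule integrable_bounded_mult[OF integrable_Q_at_policy[OF \<pi>' Q t1 that] w abs_ipw_weight_le])
    then show "integrable M (\<lambda>w. ipw_weight \<pi> (t - 1) w * Q t (H t w, \<pi> t (H t w)))"
      and "integrable M (\<lambda>w. ipw_weight \<pi> (t - 1) w * Q t (H t w, \<pi>' t (H t w)))"
      using t \<pi> \<pi>' by auto
    have "AE w in M. Q t (H t w, \<pi> t (H t w)) \<le> Q t (H t w, \<pi>' t (H t w))" using le t by auto
    then show "AE w in M. ipw_weight \<pi> (t - 1) w * Q t (H t w, \<pi> t (H t w))
                   \<le> ipw_weight \<pi> (t - 1) w * Q t (H t w, \<pi>' t (H t w))"
      by eventually_elim (intro mult_left_mono ipw_weight_bounds)
  qed
  then have "0 \<le> (\<Sum>t\<in>{2..T}. (\<integral>w. ipw_weight \<pi> (t - 1) w * Q t (H t w, \<pi>' t (H t w)) \<partial>M)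
                               - (\<integral>w. ipw_weight \<pi> (t - 1) w * Q t (H t w, \<pi> t (H t w)) \<partial>M))"
    by (intro sum_nonneg) auto
  then show ?thesis using ipw_value_telescope[OF \<pi> \<pi>' Q] by linarith
qed

section \<open>Backward induction under correct specification\<close>

text \<open>Stage-\<open>t\<close> optimality of \<open>p\<^sub>0\<close> for \<open>Q\<close>, with the null set allowed to depend on the
  competitor \<open>p\<close>; unlike the uniform version in \<^const>\<open>correct_spec\<close>, this form survives
  a.e. identifications of Q-functions when \<open>\<Pi>\<^sub>t\<close> is uncountable.\<close>

definition pointwise_optimal :: "(nat \<Rightarrow> 's hist \<times> nat \<Rightarrow> real) \<Rightarrow> nat \<Rightarrow> ('s hist \<Rightarrow> nat) \<Rightarrow> bool" where
  "pointwise_optimal Q t p\<^sub>0 \<longleftrightarrow> (\<forall>p\<in>Pol t. AE w in M. Q t (H t w, p (H t w)) \<le> Q t (H t w, p\<^sub>0 (H t w)))"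

lemma ipw_value_le_if_pointwise_optimal:
  assumes bi: "backward_induction M SM Y S A T Pol \<pi>B QB"
    and opt: "\<forall>t\<in>{2..T}. pointwise_optimal QB t (\<pi>B t)"
    and \<pi>: "\<forall>t\<in>{1..T}. \<pi> t \<in> Pol t"
  shows "ipw_value \<pi> \<le> ipw_value \<pi>B"
proof -
  have \<pi>B: "\<forall>t\<in>{1..T}. \<pi>B t \<in> Pol t" and QB: "Q_family M SM Y S A T \<pi>B QB"
    and max1: "(\<integral>w. QB 1 (H 1 w, \<pi> 1 (H 1 w)) \<partial>M) \<le> (\<integral>w. QB 1 (H 1 w, \<pi>B 1 (H 1 w)) \<partial>M)"
    using bi \<pi> T_ge_1 unfolding backward_induction_def by auto
  have "ipw_value \<pi> \<le> (\<integral>w. QB 1 (H 1 w, \<pi> 1 (H 1 w)) \<partial>M)"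
    using \<pi> \<pi>B opt by (intro ipw_value_le_Q1[OF \<pi> _ QB]) (auto simp: pointwise_optimal_def)
  also have "\<dots> \<le> ipw_value \<pi>B" using max1 ipw_value_eq_Q1[OF \<pi>B QB] by simp
  finally show ?thesis .
qed

text \<open>If \<open>Q\<^sup>B\<^sub>t\<close> and \<open>Q\<^sup>*\<^sub>t\<close> agree along the observed actions, the mean-maximiser \<open>\<pi>\<^sup>B\<^sub>t\<close> of
  \<open>Q\<^sup>B\<^sub>t\<close> can only match the pointwise maximiser \<open>\<pi>\<^sup>*\<^sub>t\<close> of \<open>Q\<^sup>*\<^sub>t\<close> if their values coincide a.e.\<close>

lemma backward_induction_value_AE_eq:
  assumes bi: "backward_induction M SM Y S A T Pol \<pi>B QB"
    and \<pi>s: "\<forall>t\<in>{2..T}. \<pi>s t \<in> Pol t" and Qs: "Q_family M SM Y S A T \<pi>s Qs"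
    and t: "t \<in> {2..T}" and opt: "pointwise_optimal Qs t (\<pi>s t)"
    and eqA: "AE w in M. QB t (H t w, A t w) = Qs t (H t w, A t w)"
  shows "AE w in M. QB t (H t w, \<pi>B t (H t w)) = Qs t (H t w, \<pi>s t (H t w))"
proof -
  have t1: "t \<in> {1..T}" using t by auto
  have \<pi>B: "\<forall>s\<in>{2..T}. \<pi>B s \<in> Pol s" and QB: "Q_family M SM Y S A T \<pi>B QB"
    and pB: "\<pi>B t \<in> Pol t" and ps: "\<pi>s t \<in> Pol t"
    and max: "(\<integral>w. QB t (H t w, \<pi>s t (H t w)) \<partial>M) \<le> (\<integral>w. QB t (H t w, \<pi>B t (H t w)) \<partial>M)"
    using bi \<pi>s t unfolding backward_induction_def by auto
  have eq_at: "AE w in M. QB t (H t w, p (H t w)) = Qs t (H t w, p (H t w))" if "p \<in> Pol t" for p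
    by (rule AE_eq_at_policy[OF t1 Q_familyD(1)[OF QB t1] Q_familyD(1)[OF Qs t1] eqA that])
  have int_eq: "(\<integral>w. QB t (H t w, p (H t w)) \<partial>M) = (\<integral>w. Qs t (H t w, p (H t w)) \<partial>M)" if "p \<in> Pol t" for p
    using eq_at[OF that] measurable_Q_at_policy[OF QB t1 that] measurable_Q_at_policy[OF Qs t1 that]
    by (intro integral_cong_AE) auto
  have iB: "integrable M (\<lambda>w. Qs t (H t w, \<pi>B t (H t w)))"
    and iS: "integrable M (\<lambda>w. Qs t (H t w, \<pi>s t (H t w)))"
    by (intro integrable_Q_at_policy[OF \<pi>s Qs t1] pB ps)+
  have gap: "AE w in M. 0 \<le> Qs t (H t w, \<pi>s t (H t w)) - Qs t (H t w, \<pi>B t (H t w))"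
    using opt pB unfolding pointwise_optimal_def by (auto elim!: AE_mp)
  have "(\<integral>w. Qs t (H t w, \<pi>s t (H t w)) - Qs t (H t w, \<pi>B t (H t w)) \<partial>M) \<le> 0"
    using max int_eq[OF pB] int_eq[OF ps] iB iS by simp
  then have "(\<integral>w. Qs t (H t w, \<pi>s t (H t w)) - Qs t (H t w, \<pi>B t (H t w)) \<partial>M) = 0"
    using integral_nonneg_AE[OF gap] by linarith
  then have "AE w in M. Qs t (H t w, \<pi>s t (H t w)) - Qs t (H t w, \<pi>B t (H t w)) = 0"
    using integral_nonneg_eq_0_iff_AE[OF _ gap] iB iS by simp
  then show ?thesis using eq_at[OF pB] by eventually_elim simp
qed

lemma backward_induction_Q_AE_eq:
  assumes bi: "backward_induction M SM Y S A T Pol \<pi>B QB"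
    and \<pi>s: "\<forall>t\<in>{2..T}. \<pi>s t \<in> Pol t" and Qs: "Q_family M SM Y S A T \<pi>s Qs"
    and opt: "\<forall>t\<in>{2..T}. pointwise_optimal Qs t (\<pi>s t)" and t: "t \<in> {2..T}"
  shows "AE w in M. QB t (H t w, A t w) = Qs t (H t w, A t w)"
proof -
  have \<pi>B: "\<forall>s\<in>{2..T}. \<pi>B s \<in> Pol s" and QB: "Q_family M SM Y S A T \<pi>B QB"
    using bi unfolding backward_induction_def by auto
  have "t \<le> T" using t by auto
  then show ?thesis using t
  proof (induction rule: inc_induct)
    case base
    show ?case
      using Q_familyD(2)[OF QB, of T] Q_familyD(2)[OF Qs, of T] T_ge_1 by (auto simp: Q_target_def elim!: AE_mp)
  next
    case (step n)
    have n: "n \<in> {1..T}" and sn: "Suc n \<in> {2..T}" using step by auto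
    interpret F: finite_measure_subalgebra M "FHA n" by (rule finite_measure_subalgebra_FHA[OF n])
    have "AE w in M. QB (Suc n) (H (Suc n) w, \<pi>B (Suc n) (H (Suc n) w))
                   = Qs (Suc n) (H (Suc n) w, \<pi>s (Suc n) (H (Suc n) w))"
      using step.IH sn opt by (intro backward_induction_value_AE_eq[OF bi \<pi>s Qs sn]) auto
    then have "AE w in M. Q_target \<pi>B QB n w = Q_target \<pi>s Qs n w"
      by eventually_elim (use step.hyps in \<open>simp add: Q_target_def\<close>)
    then have "AE w in M. real_cond_exp M (FHA n) (Q_target \<pi>B QB n) w = real_cond_exp M (FHA n) (Q_target \<pi>s Qs n) w"
      by (rule F.real_cond_exp_cong) (use integrable_Q_target[OF \<pi>B QB n] integrable_Q_target[OF \<pi>s Qs n] in auto)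
    then show ?case
      using Q_familyD(2)[OF QB n] Q_familyD(2)[OF Qs n] by eventually_elim simp
  qed
qed

lemma backward_induction_pointwise_optimal:
  assumes cs: "correct_spec M SM Y S A T Pol" and bi: "backward_induction M SM Y S A T Pol \<pi>B QB"
  shows "\<forall>t\<in>{2..T}. pointwise_optimal QB t (\<pi>B t)"
proof
  fix t assume t: "t \<in> {2..T}"
  obtain \<pi>s Qs where \<pi>s: "\<forall>t\<in>{2..T}. \<pi>s t \<in> Pol t" and Qs: "Q_family M SM Y S A T \<pi>s Qs"
    and opt_unif: "\<forall>t\<in>{2..T}. AE w in M. \<forall>p\<in>Pol t. Qs t (H t w, p (H t w)) \<le> Qs t (H t w, \<pi>s t (H t w))"
    using cs unfolding correct_spec_def by blast
  have opt: "\<forall>t\<in>{2..T}. pointwise_optimal Qs t (\<pi>s t)"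
    using opt_unif unfolding pointwise_optimal_def by (auto elim!: AE_mp)
  have t1: "t \<in> {1..T}" using t by auto
  have QB: "Q_family M SM Y S A T \<pi>B QB" using bi unfolding backward_induction_def by auto
  have eqA: "AE w in M. QB t (H t w, A t w) = Qs t (H t w, A t w)"
    by (rule backward_induction_Q_AE_eq[OF bi \<pi>s Qs opt t])
  have val: "AE w in M. QB t (H t w, \<pi>B t (H t w)) = Qs t (H t w, \<pi>s t (H t w))"
    using opt t by (intro backward_induction_value_AE_eq[OF bi \<pi>s Qs t _ eqA]) auto
  show "pointwise_optimal QB t (\<pi>B t)"
    unfolding pointwise_optimal_def
  proof
    fix p assume p: "p \<in> Pol t"
    have "AE w in M. QB t (H t w, p (H t w)) = Qs t (H t w, p (H t w))"
      by (rule AE_eq_at_policy[OF t1 Q_familyD(1)[OF QB t1] Q_familyD(1)[OF Qs t1] eqA p])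
    moreover have "AE w in M. Qs t (H t w, p (H t w)) \<le> Qs t (H t w, \<pi>s t (H t w))"
      using opt p t unfolding pointwise_optimal_def by auto
    ultimately show "AE w in M. QB t (H t w, p (H t w)) \<le> QB t (H t w, \<pi>B t (H t w))"
      using val by eventually_elim simp
  qed
qed

section \<open>Inverse-propensity representation of welfare\<close>

abbreviation "pot_vec_measure j \<equiv> Pi\<^sub>M {j..T} (\<lambda>_. borel :: real measure) \<Otimes>\<^sub>M Pi\<^sub>M {j<..T} (\<lambda>_. SM)"

lemma measurable_pot_vec:
  assumes j: "j \<in> {1..T}" and as: "as \<in> act_seqs d T"
  shows "pot_vec Y S T j as \<in> measurable M (pot_vec_measure j)"
proof -
  have "pot_vec Y S T j as = (\<lambda>w. ((\<lambda>s\<in>{j..T}. Y s (take s as) w), (\<lambda>s\<in>{j<..T}. S s (take (s - 1) as) w)))"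
    by (rule ext) (simp add: pot_vec_def)
  also have "\<dots> \<in> measurable M (pot_vec_measure j)"
  proof (intro measurable_Pair measurable_restrict)
    fix s assume "s \<in> {j..T}"
    then show "Y s (take s as) \<in> borel_measurable M"
      using j as by (intro borel_measurable_integrable integrable_Y take_in_act_seqs) auto
  next
    fix s assume "s \<in> {j<..T}"
    then show "S s (take (s - 1) as) \<in> measurable M SM"
      using j as by (intro measurable_S take_in_act_seqs) auto
  qed
  finally show ?thesis .
qed

text \<open>The core use of sequential ignorability: given \<open>H\<^sub>j\<close>, the potential outcomes and
  states after stage \<open>j\<close> are independent of \<open>A\<^sub>j\<close>, so on events defined by them the
  restriction to \<open>A\<^sub>j = a\<close> is undone by the inverse propensity.\<close>

lemma integral_pot_vec_event_reweight:
  assumes j: "j \<in> {1..T}" and as: "as \<in> act_seqs d T"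
    and K: "K \<in> borel_measurable (FH j)" "\<And>w. w \<in> space M \<Longrightarrow> \<bar>K w\<bar> \<le> B"
    and Ke: "AE w in M. K w \<noteq> 0 \<longrightarrow> \<eta> \<le> e j a w"
    and Z: "Z \<in> sets (pot_vec_measure j)"
  shows "(\<integral>w. K w * inv_propensity j a w
              * indicator (pot_vec Y S T j as -` Z \<inter> space M \<inter> {x\<in>space M. A j x = a}) w \<partial>M)
       = (\<integral>w. K w * indicator (pot_vec Y S T j as -` Z \<inter> space M) w \<partial>M)"
proof -
  interpret F: finite_measure_subalgebra M "FH j" using j by (intro finite_measure_subalgebra_FH) auto
  define V where "V = pot_vec Y S T j as"
  define E1 where "E1 = V -` Z \<inter> space M"
  define Ea where "Ea = {x\<in>space M. A j x = a}"
  have E1: "E1 \<in> sets M" unfolding E1_def V_def by (rule measurable_sets[OF measurable_pot_vec[OF j as] Z])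
  have Ea: "Ea \<in> sets M" unfolding Ea_def by (rule sets_A_eq[OF j])
  have "cond_indep M (FH j) (vimage_algebra (space M) V (pot_vec_measure j))
                            (vimage_algebra (space M) (A j) (count_space UNIV))"
    using ignorability j as unfolding seq_ignorability_def V_def by auto
  moreover have "E1 \<in> sets (vimage_algebra (space M) V (pot_vec_measure j))"
    unfolding E1_def by (rule in_vimage_algebra[OF Z])
  moreover have "Ea = A j -` {a} \<inter> space M" unfolding Ea_def by auto
  then have "Ea \<in> sets (vimage_algebra (space M) (A j) (count_space UNIV))" by (simp add: in_vimage_algebra)
  ultimately have ci: "AE w in M. real_cond_exp M (FH j) (indicator (E1 \<inter> Ea)) w
      = real_cond_exp M (FH j) (indicator E1) w * real_cond_exp M (FH j) (indicator Ea) w"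
    unfolding cond_indep_def by blast
  have inv: "AE w in M. K w \<noteq> 0 \<longrightarrow> inv_propensity j a w * real_cond_exp M (FH j) (indicator Ea) w = 1"
    using Ke by eventually_elim (auto simp: Ea_def inv_propensity_mult_e)
  have r: "inv_propensity j a \<in> borel_measurable (FH j)" by (simp add: inv_propensity_def[abs_def])
  have "\<bar>inv_propensity j a w\<bar> \<le> 1 / \<eta>" for w
    using inv_propensity_bounds[of j a w] by (simp add: abs_of_nonneg)
  from F.integral_cond_indep_reweight[OF K r this E1 Ea ci inv] show ?thesis
    unfolding E1_def Ea_def V_def .
qed

lemma integral_reweight_by_ignorability:
  assumes j: "j \<in> {1..T}" and as: "as \<in> act_seqs d T"
    and G: "G \<in> borel_measurable (FH j)" "\<And>w. w \<in> space M \<Longrightarrow> 0 \<le> G w \<and> G w \<le> B"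
    and Ge: "AE w in M. G w \<noteq> 0 \<longrightarrow> \<eta> \<le> e j a w"
    and f: "f \<in> borel_measurable (HM SM j \<Otimes>\<^sub>M pot_vec_measure j)"
  shows "(\<integral>w. G w * f (H j w, pot_vec Y S T j as w) \<partial>M) =
    (\<integral>w. G w * (inv_propensity j a w * indicator {x\<in>space M. A j x = a} w) * f (H j w, pot_vec Y S T j as w) \<partial>M)"
proof -
  have jT: "j \<le> T" using j by auto
  define V where "V = pot_vec Y S T j as"
  define g2 where "g2 w = G w * (inv_propensity j a w * indicator {x\<in>space M. A j x = a} w)" for w
  have GM: "G \<in> borel_measurable M" by (rule measurable_FH_M[OF jT G(1)])
  have r: "inv_propensity j a \<in> borel_measurable (FH j)" by (simp add: inv_propensity_def[abs_def])
  have g2: "g2 \<in> borel_measurable M"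
    unfolding g2_def[abs_def] using GM measurable_FH_M[OF jT r] sets_A_eq[OF j] by measurable
  have g2b: "0 \<le> g2 w \<and> g2 w \<le> B * (1 / \<eta>)" if "w \<in> space M" for w
  proof -
    have "G w * inv_propensity j a w \<le> B * (1 / \<eta>)"
      using G(2)[OF that] inv_propensity_bounds[of j a w] by (intro mult_mono) auto
    moreover have "0 \<le> B * (1 / \<eta>)" using G(2)[OF that] eta_pos by simp
    ultimately show ?thesis
      using G(2)[OF that] inv_propensity_bounds[of j a w] by (auto simp: g2_def indicator_def)
  qed
  have rect: "(\<integral>w. G w * indicator (X \<times> Z) (H j w, V w) \<partial>M) = (\<integral>w. g2 w * indicator (X \<times> Z) (H j w, V w) \<partial>M)"
    if X: "X \<in> sets (HM SM j)" and Z: "Z \<in> sets (pot_vec_measure j)" for X Z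
  proof -
    define K where "K w = G w * indicator X (H j w)" for w
    have K: "K \<in> borel_measurable (FH j)" unfolding K_def[abs_def] using G(1) measurable_H_FH[OF jT] X by measurable
    have "\<bar>K w\<bar> \<le> B" if "w \<in> space M" for w using G(2)[OF that] by (auto simp: K_def indicator_def)
    moreover have "AE w in M. K w \<noteq> 0 \<longrightarrow> \<eta> \<le> e j a w" using Ge by eventually_elim (simp add: K_def)
    ultimately have "(\<integral>w. K w * inv_propensity j a w * indicator (V -` Z \<inter> space M \<inter> {x\<in>space M. A j x = a}) w \<partial>M)
        = (\<integral>w. K w * indicator (V -` Z \<inter> space M) w \<partial>M)"
      unfolding V_def by (rule integral_pot_vec_event_reweight[OF j as K _ _ Z])
    moreover have "(\<integral>w. g2 w * indicator (X \<times> Z) (H j w, V w) \<partial>M)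
        = (\<integral>w. K w * inv_propensity j a w * indicator (V -` Z \<inter> space M \<inter> {x\<in>space M. A j x = a}) w \<partial>M)"
      by (intro Bochner_Integration.integral_cong)
        (simp_all add: g2_def K_def indicator_inter_arith indicator_times indicator_vimage ac_simps)
    moreover have "(\<integral>w. G w * indicator (X \<times> Z) (H j w, V w) \<partial>M) = (\<integral>w. K w * indicator (V -` Z \<inter> space M) w \<partial>M)"
      by (intro Bochner_Integration.integral_cong)
        (simp_all add: K_def indicator_inter_arith indicator_times indicator_vimage ac_simps)
    ultimately show ?thesis by simp
  qed
  have "(\<integral>w. G w * f (H j w, V w) \<partial>M) = (\<integral>w. g2 w * f (H j w, V w) \<partial>M)"
    using measurable_H[OF jT] measurable_pot_vec[OF j as, folded V_def]
    by (intro integral_density_eq_if_eq_on_rectangles[OF _ GM g2 G(2) g2b rect f]) measurable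
  then show ?thesis by (simp add: V_def g2_def mult_ac)
qed

lemma d_pos: "t \<in> {1..T} \<Longrightarrow> 0 < d t"
  using A_less not_empty by fastforce

text \<open>Sequential ignorability is assumed for complete sequences in \<open>act_seqs d T\<close>;
  shorter ones are padded with the action \<open>0\<close>.\<close>

definition pad_acts :: "nat list \<Rightarrow> nat list" where
  "pad_acts as = as @ replicate (T - length as) 0"

lemma pad_acts_in_act_seqs: "as \<in> act_seqs d t \<Longrightarrow> t \<le> T \<Longrightarrow> pad_acts as \<in> act_seqs d T"
  unfolding act_seqs_def pad_acts_def by (auto simp: nth_append intro!: d_pos)

lemma take_pad_acts: "i \<le> length as \<Longrightarrow> take i (pad_acts as) = take i as"
  by (simp add: pad_acts_def)

text \<open>The potential history \<open>H\<^sub>s(a\<^sub>s\<^sub>-\<^sub>1)\<close>, \<open>s \<ge> j\<close>, rebuilt from a history at stage \<open>j\<close>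
  and a value of \<^const>\<open>pot_vec\<close> at \<open>j\<close>.\<close>

definition spliced_hist :: "nat list \<Rightarrow> nat \<Rightarrow> nat \<Rightarrow> 's hist \<times> ((nat \<Rightarrow> real) \<times> (nat \<Rightarrow> 's)) \<Rightarrow> 's hist" where
  "spliced_hist as j s x =
     ((\<lambda>i\<in>{1..<s}. as ! (i - 1)), (\<lambda>i\<in>{1..s}. if i \<le> j then snd (fst x) i else snd (snd x) i))"

definition future_term :: "(nat \<Rightarrow> 's hist \<Rightarrow> nat) \<Rightarrow> nat list \<Rightarrow> nat \<Rightarrow> nat
    \<Rightarrow> 's hist \<times> ((nat \<Rightarrow> real) \<times> (nat \<Rightarrow> 's)) \<Rightarrow> real" where
  "future_term \<pi> as t j x =
     fst (snd x) t * (\<Prod>s\<in>{j<..t}. if \<pi> s (spliced_hist as j s x) = as ! (s - 1) then 1 else 0)"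

lemma measurable_spliced_hist:
  assumes "s \<le> T" "j \<le> s"
  shows "spliced_hist as j s \<in> measurable (HM SM j \<Otimes>\<^sub>M pot_vec_measure j) (HM SM s)"
  unfolding spliced_hist_def[abs_def] HM_def
proof (intro measurable_Pair measurable_const measurable_restrict)
  fix i assume i: "i \<in> {1..s}"
  show "(\<lambda>x. if i \<le> j then snd (fst x) i else snd (snd x) i)
      \<in> measurable ((Pi\<^sub>M {1..<j} (\<lambda>_. count_space UNIV) \<Otimes>\<^sub>M Pi\<^sub>M {1..j} (\<lambda>_. SM)) \<Otimes>\<^sub>M pot_vec_measure j) SM"
  proof (cases "i \<le> j")
    case True
    have "(\<lambda>x. snd (fst x) i)
        \<in> measurable ((Pi\<^sub>M {1..<j} (\<lambda>_. count_space UNIV) \<Otimes>\<^sub>M Pi\<^sub>M {1..j} (\<lambda>_. SM)) \<Otimes>\<^sub>M pot_vec_measure j) SM"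
      using i True by (intro measurable_compose[OF measurable_fst] measurable_compose[OF measurable_snd]
          measurable_component_singleton) auto
    then show ?thesis using True by simp
  next
    case False
    have "(\<lambda>x. snd (snd x) i)
        \<in> measurable ((Pi\<^sub>M {1..<j} (\<lambda>_. count_space UNIV) \<Otimes>\<^sub>M Pi\<^sub>M {1..j} (\<lambda>_. SM)) \<Otimes>\<^sub>M pot_vec_measure j) SM"
      using i False assms by (intro measurable_compose[OF measurable_snd] measurable_compose[OF measurable_snd]
          measurable_component_singleton) auto
    then show ?thesis using False by simp
  qed
qed (simp add: space_PiM)

lemma measurable_future_term:
  assumes "t \<le> T" "j \<le> t" "1 \<le> j" "\<forall>s\<in>{1..T}. \<pi> s \<in> Pol s"
  shows "future_term \<pi> as t j \<in> borel_measurable (HM SM j \<Otimes>\<^sub>M pot_vec_measure j)"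
proof -
  have "(\<lambda>x. fst (snd x) t) \<in> borel_measurable (HM SM j \<Otimes>\<^sub>M pot_vec_measure j)"
    using assms by (intro measurable_compose[OF measurable_snd] measurable_compose[OF measurable_fst]
        measurable_component_singleton) auto
  moreover have "(\<lambda>x. if \<pi> s (spliced_hist as j s x) = as ! (s - 1) then 1 else 0 :: real)
      \<in> borel_measurable (HM SM j \<Otimes>\<^sub>M pot_vec_measure j)" if "s \<in> {j<..t}" for s
  proof -
    have "(\<lambda>x. \<pi> s (spliced_hist as j s x)) \<in> measurable (HM SM j \<Otimes>\<^sub>M pot_vec_measure j) (count_space UNIV)"
      using that assms by (intro measurable_compose[OF measurable_spliced_hist measurable_policy]) auto
    then show ?thesis by measurable
  qed
  ultimately show ?thesis
    unfolding future_term_def[abs_def] by (intro borel_measurable_times borel_measurable_prod) auto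
qed

lemma future_term_eq:
  assumes pre: "\<forall>s\<in>{1..k}. A s w = as ! (s - 1)" and t: "t \<le> T" "length as = t" "k < t"
  shows "Y t as w * (\<Prod>s\<in>{Suc k<..t}. if \<pi> s (pot_hist S s (take (s - 1) as) w) = as ! (s - 1) then 1 else 0)
       = future_term \<pi> as t (Suc k) (H (Suc k) w, pot_vec Y S T (Suc k) (pad_acts as) w)"
proof -
  let ?x = "(H (Suc k) w, pot_vec Y S T (Suc k) (pad_acts as) w)"
  have "pot_hist S s (take (s - 1) as) w = spliced_hist as (Suc k) s ?x" if s: "s \<in> {Suc k<..t}" for s
  proof -
    have "S i (take (i - 1) as) w = (if i \<le> Suc k then snd (H (Suc k) w) i else snd (pot_vec Y S T (Suc k) (pad_acts as) w) i)"
      if i: "i \<in> {1..s}" for i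
    proof (cases "i \<le> Suc k")
      case True
      then have "obs_acts A (i - 1) w = take (i - 1) as" using pre t by (intro obs_acts_eq_take[of k]) auto
      then show ?thesis using i True by (simp add: obs_hist_eq)
    next
      case False
      then show ?thesis using i s t by (simp add: pot_vec_def take_pad_acts)
    qed
    then show ?thesis using s by (auto simp: pot_hist_def spliced_hist_def fun_eq_iff)
  qed
  moreover have "fst (pot_vec Y S T (Suc k) (pad_acts as) w) t = Y t as w"
    using t take_pad_acts[of t as] by (simp add: pot_vec_def)
  ultimately show ?thesis unfolding future_term_def by (intro arg_cong2[where f="(*)"] prod.cong) auto
qed

definition ipw_factor_at :: "(nat \<Rightarrow> 's hist \<Rightarrow> nat) \<Rightarrow> nat \<Rightarrow> nat list \<Rightarrow> 'w \<Rightarrow> real" where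
  "ipw_factor_at \<pi> s as w = (if A s w = as ! (s - 1) then ipw_factor s (\<pi> s) w else 0)"

definition pot_indicator :: "(nat \<Rightarrow> 's hist \<Rightarrow> nat) \<Rightarrow> nat \<Rightarrow> nat list \<Rightarrow> 'w \<Rightarrow> real" where
  "pot_indicator \<pi> s as w = (if \<pi> s (pot_hist S s (take (s - 1) as) w) = as ! (s - 1) then 1 else 0)"

text \<open>Interpolates between a term of \<^const>\<open>welfare\<close> (\<open>k = 0\<close>) and its
  inverse-propensity form (\<open>k = t\<close>).\<close>

definition partial_ipw_integral :: "(nat \<Rightarrow> 's hist \<Rightarrow> nat) \<Rightarrow> nat \<Rightarrow> nat list \<Rightarrow> nat \<Rightarrow> real" where
  "partial_ipw_integral \<pi> t as k =
     (\<integral>w. Y t as w * (\<Prod>s\<in>{1..k}. ipw_factor_at \<pi> s as w) * (\<Prod>s\<in>{k<..t}. pot_indicator \<pi> s as w) \<partial>M)"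

lemma ipw_factor_at_bounds: "0 \<le> ipw_factor_at \<pi> s as w" "ipw_factor_at \<pi> s as w \<le> 1 / \<eta>"
  using ipw_factor_bounds[of s "\<pi> s" w] eta_pos by (auto simp: ipw_factor_at_def)

lemma prod_ipw_factor_at_bounds:
  "0 \<le> (\<Prod>s\<in>{1..k}. ipw_factor_at \<pi> s as w)" "(\<Prod>s\<in>{1..k}. ipw_factor_at \<pi> s as w) \<le> (1 / \<eta>) ^ k"
proof -
  show "0 \<le> (\<Prod>s\<in>{1..k}. ipw_factor_at \<pi> s as w)" by (intro prod_nonneg) (auto intro: ipw_factor_at_bounds)
  have "(\<Prod>s\<in>{1..k}. ipw_factor_at \<pi> s as w) \<le> (\<Prod>s\<in>{1..k}. 1 / \<eta>)"
    by (intro prod_mono) (auto intro: ipw_factor_at_bounds)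
  then show "(\<Prod>s\<in>{1..k}. ipw_factor_at \<pi> s as w) \<le> (1 / \<eta>) ^ k" by simp
qed

lemma prefix_if_prod_ipw_factor_at_nonzero:
  "(\<Prod>s\<in>{1..k}. ipw_factor_at \<pi> s as w) \<noteq> 0 \<Longrightarrow> \<forall>s\<in>{1..k}. A s w = as ! (s - 1)"
  by (auto simp: ipw_factor_at_def split: if_splits)

lemma measurable_ipw_factor_at_FH:
  assumes "1 \<le> s" "s < j" "j \<le> T" "\<pi> s \<in> Pol s"
  shows "ipw_factor_at \<pi> s as \<in> borel_measurable (FH j)"
proof -
  have "{w \<in> space (FH j). A s w = as ! (s - 1)} \<in> sets (FH j)"
    using measurable_A_FH[OF assms(1-3)] by measurable
  then show ?thesis
    unfolding ipw_factor_at_def[abs_def] using measurable_ipw_factor_FH[OF assms] by measurable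
qed

lemma measurable_ipw_factor_at:
  assumes "s \<in> {1..T}" "\<pi> s \<in> Pol s"
  shows "ipw_factor_at \<pi> s as \<in> borel_measurable M"
proof -
  have "ipw_factor s (\<pi> s) \<in> borel_measurable M"
    using assms by (intro measurable_FHA_M[OF _ measurable_ipw_factor_FHA]) auto
  then show ?thesis unfolding ipw_factor_at_def[abs_def] using measurable_A[OF assms(1)] by measurable
qed

lemma measurable_pot_indicator:
  assumes "s \<in> {1..T}" "\<pi> s \<in> Pol s" "as \<in> act_seqs d t" "s \<le> t"
  shows "pot_indicator \<pi> s as \<in> borel_measurable M"
proof -
  have "(\<lambda>w. \<pi> s (pot_hist S s (take (s - 1) as) w)) \<in> measurable M (count_space UNIV)"
    using assms by (intro measurable_compose[OF measurable_pot_hist measurable_policy] take_in_act_seqs) auto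
  then show ?thesis unfolding pot_indicator_def[abs_def] by measurable
qed

lemma partial_ipw_integrand_eq:
  assumes as: "as \<in> act_seqs d t" and t: "t \<le> T" "k < t"
  shows "Y t as w * (\<Prod>s\<in>{1..k}. ipw_factor_at \<pi> s as w) * (\<Prod>s\<in>{k<..t}. pot_indicator \<pi> s as w)
       = (\<Prod>s\<in>{1..k}. ipw_factor_at \<pi> s as w) * (if \<pi> (Suc k) (H (Suc k) w) = as ! k then 1 else 0)
         * future_term \<pi> as t (Suc k) (H (Suc k) w, pot_vec Y S T (Suc k) (pad_acts as) w)"
proof (cases "(\<Prod>s\<in>{1..k}. ipw_factor_at \<pi> s as w) = 0")
  case False
  note pre = prefix_if_prod_ipw_factor_at_nonzero[OF False]
  have len: "length as = t" using as by (simp add: act_seqs_def)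
  have "pot_hist S (Suc k) (take k as) w = H (Suc k) w"
    using pre len t by (intro pot_hist_take_eq_obs_hist) auto
  moreover have "{k<..t} = insert (Suc k) {Suc k<..t}" using t by auto
  ultimately have "(\<Prod>s\<in>{k<..t}. pot_indicator \<pi> s as w)
      = (if \<pi> (Suc k) (H (Suc k) w) = as ! k then 1 else 0) * (\<Prod>s\<in>{Suc k<..t}. pot_indicator \<pi> s as w)"
    by (simp add: pot_indicator_def)
  then show ?thesis
    using future_term_eq[where \<pi>=\<pi>, OF pre t(1) len t(2)] by (simp add: pot_indicator_def mult_ac)
qed simp

lemma partial_ipw_integrand_Suc_eq:
  assumes as: "as \<in> act_seqs d t" and t: "t \<le> T" "k < t" and w: "w \<in> space M"
  shows "Y t as w * (\<Prod>s\<in>{1..Suc k}. ipw_factor_at \<pi> s as w) * (\<Prod>s\<in>{Suc k<..t}. pot_indicator \<pi> s as w)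
       = (\<Prod>s\<in>{1..k}. ipw_factor_at \<pi> s as w) * (if \<pi> (Suc k) (H (Suc k) w) = as ! k then 1 else 0)
         * (inv_propensity (Suc k) (as ! k) w * indicator {x\<in>space M. A (Suc k) x = as ! k} w)
         * future_term \<pi> as t (Suc k) (H (Suc k) w, pot_vec Y S T (Suc k) (pad_acts as) w)"
proof (cases "(\<Prod>s\<in>{1..k}. ipw_factor_at \<pi> s as w) = 0")
  case False
  note pre = prefix_if_prod_ipw_factor_at_nonzero[OF False]
  have len: "length as = t" using as by (simp add: act_seqs_def)
  have "ipw_factor_at \<pi> (Suc k) as w = (if \<pi> (Suc k) (H (Suc k) w) = as ! k then 1 else 0)
      * (inv_propensity (Suc k) (as ! k) w * indicator {x\<in>space M. A (Suc k) x = as ! k} w)"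
    using w by (auto simp: ipw_factor_at_def ipw_factor_def indicator_def)
  then show ?thesis
    using future_term_eq[where \<pi>=\<pi>, OF pre t(1) len t(2)] by (simp add: prod.cl_ivl_Suc pot_indicator_def mult_ac)
qed (simp add: prod.cl_ivl_Suc)

lemma partial_ipw_integral_Suc:
  assumes \<pi>: "\<forall>s\<in>{1..T}. \<pi> s \<in> Pol s" and as: "as \<in> act_seqs d t" and t: "t \<le> T" "k < t"
  shows "partial_ipw_integral \<pi> t as k = partial_ipw_integral \<pi> t as (Suc k)"
proof -
  define j where "j = Suc k"
  have j: "j \<in> {1..T}" and pj: "\<pi> j \<in> Pol j" using t \<pi> by (auto simp: j_def)
  define G where "G w = (\<Prod>s\<in>{1..k}. ipw_factor_at \<pi> s as w) * (if \<pi> j (H j w) = as ! k then 1 else 0)" for w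
  have "{w \<in> space (FH j). \<pi> j (H j w) = as ! k} \<in> sets (FH j)"
    using measurable_policy_H_FH[OF j pj] by measurable
  then have G: "G \<in> borel_measurable (FH j)"
    unfolding G_def[abs_def] using j \<pi>
    by (intro borel_measurable_times borel_measurable_prod measurable_ipw_factor_at_FH) (auto simp: j_def)
  have Gb: "0 \<le> G w \<and> G w \<le> (1 / \<eta>) ^ k" for w
    using prod_ipw_factor_at_bounds[where k=k and \<pi>=\<pi> and as=as and w=w] by (auto simp: G_def)
  have Ge: "AE w in M. G w \<noteq> 0 \<longrightarrow> \<eta> \<le> e j (as ! k) w"
    using overlap_AE_policy[OF j pj] by eventually_elim (auto simp: G_def)
  have f: "future_term \<pi> as t j \<in> borel_measurable (HM SM j \<Otimes>\<^sub>M pot_vec_measure j)"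
    using t \<pi> by (intro measurable_future_term) (auto simp: j_def)
  have "partial_ipw_integral \<pi> t as k = (\<integral>w. G w * future_term \<pi> as t j (H j w, pot_vec Y S T j (pad_acts as) w) \<partial>M)"
    unfolding partial_ipw_integral_def
    by (intro Bochner_Integration.integral_cong refl, subst partial_ipw_integrand_eq[OF as t]) (simp add: G_def j_def)
  also have "\<dots> = (\<integral>w. G w * (inv_propensity j (as ! k) w * indicator {x\<in>space M. A j x = as ! k} w)
                         * future_term \<pi> as t j (H j w, pot_vec Y S T j (pad_acts as) w) \<partial>M)"
    by (rule integral_reweight_by_ignorability[OF j pad_acts_in_act_seqs[OF as t(1)] G Gb Ge f])
  also have "\<dots> = partial_ipw_integral \<pi> t as (Suc k)"
    unfolding partial_ipw_integral_def
    by (intro Bochner_Integration.integral_cong refl, subst partial_ipw_integrand_Suc_eq[OF as t]) (simp_all add: G_def j_def)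
  finally show ?thesis .
qed

lemma integral_pot_indicators_eq_ipw_factors:
  assumes \<pi>: "\<forall>s\<in>{1..T}. \<pi> s \<in> Pol s" and as: "as \<in> act_seqs d t" and t: "t \<le> T"
  shows "(\<integral>w. Y t as w * (\<Prod>s\<in>{1..t}. pot_indicator \<pi> s as w) \<partial>M)
       = (\<integral>w. Y t as w * (\<Prod>s\<in>{1..t}. ipw_factor_at \<pi> s as w) \<partial>M)"
proof -
  have "partial_ipw_integral \<pi> t as 0 = partial_ipw_integral \<pi> t as k" if "k \<le> t" for k
    using that by (induction k) (auto simp: partial_ipw_integral_Suc[OF \<pi> as t])
  from this[of t] show ?thesis
    by (simp add: partial_ipw_integral_def greaterThanAtMost_eq_atLeastAtMost_diff[symmetric]
        atLeastSucAtMost_greaterThanAtMost[symmetric])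
qed

lemma prod_ipw_factor_at:
  assumes w: "w \<in> space M" and as: "as \<in> act_seqs d t"
  shows "(\<Prod>s\<in>{1..t}. ipw_factor_at \<pi> s as w) = (if obs_acts A t w = as then ipw_weight \<pi> t w else 0)"
proof (cases "obs_acts A t w = as")
  case True
  then have "A s w = as ! (s - 1)" if "s \<in> {1..t}" for s
    using that nth_obs_acts[of "s - 1" t A w] by auto
  then show ?thesis using True by (simp add: ipw_weight_def ipw_factor_at_def)
next
  case False
  have "length as = t" using as by (simp add: act_seqs_def)
  then obtain i where i: "i < t" "obs_acts A t w ! i \<noteq> as ! i"
    using False by (metis nth_equalityI length_obs_acts)
  then have "ipw_factor_at \<pi> (Suc i) as w = 0" by (simp add: nth_obs_acts ipw_factor_at_def)
  then have "(\<Prod>s\<in>{1..t}. ipw_factor_at \<pi> s as w) = 0" using i by (intro prod_zero bexI[of _ "Suc i"]) auto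
  then show ?thesis using False by simp
qed

lemma integrable_pot_term:
  assumes "\<forall>s\<in>{1..T}. \<pi> s \<in> Pol s" "t \<in> {1..T}" "as \<in> act_seqs d t"
  shows "integrable M (\<lambda>w. Y t as w * (\<Prod>s\<in>{1..t}. pot_indicator \<pi> s as w))"
proof -
  have "integrable M (\<lambda>w. (\<Prod>s\<in>{1..t}. pot_indicator \<pi> s as w) * Y t as w)"
  proof (rule integrable_bounded_mult[OF integrable_Y[OF assms(2,3)], where B=1])
    show "(\<lambda>w. \<Prod>s\<in>{1..t}. pot_indicator \<pi> s as w) \<in> borel_measurable M"
      using assms by (intro borel_measurable_prod measurable_pot_indicator) auto
  qed (auto simp: pot_indicator_def abs_prod intro!: prod_le_1)
  then show ?thesis by (simp add: mult_ac)
qed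

lemma integrable_ipw_term:
  assumes "\<forall>s\<in>{1..T}. \<pi> s \<in> Pol s" "t \<in> {1..T}" "as \<in> act_seqs d t"
  shows "integrable M (\<lambda>w. Y t as w * (\<Prod>s\<in>{1..t}. ipw_factor_at \<pi> s as w))"
proof -
  have "integrable M (\<lambda>w. (\<Prod>s\<in>{1..t}. ipw_factor_at \<pi> s as w) * Y t as w)"
  proof (rule integrable_bounded_mult[OF integrable_Y[OF assms(2,3)], where B="(1 / \<eta>) ^ t"])
    show "(\<lambda>w. \<Prod>s\<in>{1..t}. ipw_factor_at \<pi> s as w) \<in> borel_measurable M"
      using assms by (intro borel_measurable_prod measurable_ipw_factor_at) auto
    show "\<bar>\<Prod>s\<in>{1..t}. ipw_factor_at \<pi> s as w\<bar> \<le> (1 / \<eta>) ^ t" for w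
      using prod_ipw_factor_at_bounds[where k=t and \<pi>=\<pi> and as=as and w=w] by simp
  qed
  then show ?thesis by (simp add: mult_ac)
qed

lemma welfare_eq_ipw_value:
  assumes \<pi>: "\<forall>s\<in>{1..T}. \<pi> s \<in> Pol s"
  shows "welfare M d Y S T \<pi> = ipw_value \<pi>"
proof -
  have "welfare M d Y S T \<pi>
      = (\<integral>w. (\<Sum>t\<in>{1..T}. \<Sum>as\<in>act_seqs d t. Y t as w * (\<Prod>s\<in>{1..t}. pot_indicator \<pi> s as w)) \<partial>M)"
    by (simp add: welfare_def pot_indicator_def)
  also have "\<dots> = (\<Sum>t\<in>{1..T}. \<Sum>as\<in>act_seqs d t. \<integral>w. Y t as w * (\<Prod>s\<in>{1..t}. pot_indicator \<pi> s as w) \<partial>M)"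
    using integrable_pot_term[OF \<pi>] by (simp add: Bochner_Integration.integral_sum)
  also have "\<dots> = (\<Sum>t\<in>{1..T}. \<Sum>as\<in>act_seqs d t. \<integral>w. Y t as w * (\<Prod>s\<in>{1..t}. ipw_factor_at \<pi> s as w) \<partial>M)"
    by (intro sum.cong refl integral_pot_indicators_eq_ipw_factors[OF \<pi>]) auto
  also have "\<dots> = (\<Sum>t\<in>{1..T}. \<integral>w. (\<Sum>as\<in>act_seqs d t. Y t as w * (\<Prod>s\<in>{1..t}. ipw_factor_at \<pi> s as w)) \<partial>M)"
    using integrable_ipw_term[OF \<pi>] by (simp add: Bochner_Integration.integral_sum)
  also have "\<dots> = ipw_value \<pi>"
    unfolding ipw_value_def
  proof (intro sum.cong refl Bochner_Integration.integral_cong)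
    fix t w assume t: "t \<in> {1..T}" and w: "w \<in> space M"
    have "(\<Sum>as\<in>act_seqs d t. Y t as w * (\<Prod>s\<in>{1..t}. ipw_factor_at \<pi> s as w))
        = (\<Sum>as\<in>act_seqs d t. if obs_acts A t w = as then Y t as w * ipw_weight \<pi> t w else 0)"
    proof (rule sum.cong[OF refl])
      fix as assume "as \<in> act_seqs d t"
      then show "Y t as w * (\<Prod>s\<in>{1..t}. ipw_factor_at \<pi> s as w)
          = (if obs_acts A t w = as then Y t as w * ipw_weight \<pi> t w else 0)"
        by (subst prod_ipw_factor_at[OF w]) simp_all
    qed
    also have "\<dots> = Y t (obs_acts A t w) w * ipw_weight \<pi> t w"
      using obs_acts_in_act_seqs[of t w] t w finite_act_seqs by (simp add: sum.delta')
    finally show "(\<Sum>as\<in>act_seqs d t. Y t as w * (\<Prod>s\<in>{1..t}. ipw_factor_at \<pi> s as w))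
        = ipw_weight \<pi> t w * obs_Y Y A t w"
      by (simp add: obs_Y_def mult_ac)
  qed
  finally show ?thesis .
qed

end

lemma dtrI:
  assumes "prob_space M" "1 \<le> T"
    and "\<forall>t\<in>{1..T}. A t \<in> measurable M (count_space UNIV) \<and> (\<forall>\<omega>\<in>space M. A t \<omega> < d t)"
    and "\<forall>t\<in>{1..T}. \<forall>as\<in>act_seqs d (t - 1). S t as \<in> measurable M SM"
    and "\<forall>t\<in>{1..T}. \<forall>as\<in>act_seqs d t. integrable M (Y t as)"
    and "\<forall>t\<in>{1..T}. Pol t \<subseteq> {p. policy SM d t p}"
    and "seq_ignorability M SM d Y S A T" and "0 < \<eta>"
    and "\<forall>t\<in>{1..T}. \<forall>a. AE \<omega> in M. (\<exists>p\<in>Pol t. p (obs_hist S A t \<omega>) = a) \<longrightarrow>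
           \<eta> \<le> real_cond_exp M (H_alg M SM S A t) (indicator {x\<in>space M. A t x = a}) \<omega>"
  shows "dtr M SM T d Y S A Pol \<eta>"
  unfolding dtr_def using assms by blast

theorem lemma1:
  fixes M :: "'w measure" and SM :: "'s measure"
    and T :: nat and d :: "nat \<Rightarrow> nat"
    and Y :: "nat \<Rightarrow> nat list \<Rightarrow> 'w \<Rightarrow> real"
    and S :: "nat \<Rightarrow> nat list \<Rightarrow> 'w \<Rightarrow> 's"
    and A :: "nat \<Rightarrow> 'w \<Rightarrow> nat"
    and Pol :: "nat \<Rightarrow> ('s hist \<Rightarrow> nat) set"
    and \<pi>B :: "nat \<Rightarrow> 's hist \<Rightarrow> nat"
    and QB :: "nat \<Rightarrow> 's hist \<times> nat \<Rightarrow> real"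
  assumes "prob_space M"
    and "1 \<le> T"
    and "\<forall>t\<in>{1..T}. 2 \<le> d t"
    and "\<forall>t\<in>{1..T}. A t \<in> measurable M (count_space UNIV) \<and> (\<forall>\<omega>\<in>space M. A t \<omega> < d t)"
    and "\<forall>t\<in>{1..T}. \<forall>as\<in>act_seqs d (t - 1). S t as \<in> measurable M SM"
    and "\<forall>t\<in>{1..T}. \<forall>as\<in>act_seqs d t. integrable M (Y t as)"
    and "\<forall>t\<in>{1..T}. Pol t \<subseteq> {p. policy SM d t p}"
    and "seq_ignorability M SM d Y S A T"
    and "overlap M SM S A T Pol"
    and "correct_spec M SM Y S A T Pol"
    and "backward_induction M SM Y S A T Pol \<pi>B QB"
  shows "\<forall>\<pi>. (\<forall>t\<in>{1..T}. \<pi> t \<in> Pol t) \<longrightarrow> welfare M d Y S T \<pi> \<le> welfare M d Y S T \<pi>B"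
proof -
  obtain \<eta> :: real where "0 < \<eta>" and overlap_\<eta>: "\<forall>t\<in>{1..T}. \<forall>a. AE \<omega> in M.
      (\<exists>p\<in>Pol t. p (obs_hist S A t \<omega>) = a) \<longrightarrow>
      \<eta> \<le> real_cond_exp M (H_alg M SM S A t) (indicator {x\<in>space M. A t x = a}) \<omega>"
    using assms(9) unfolding overlap_def by blast
  interpret dtr M SM T d Y S A Pol \<eta>
    by (rule dtrI[OF assms(1,2,4-8) \<open>0 < \<eta>\<close> overlap_\<eta>])
  have opt: "\<forall>t\<in>{2..T}. pointwise_optimal QB t (\<pi>B t)"
    by (rule backward_induction_pointwise_optimal[OF assms(10,11)])
  have \<pi>B: "\<forall>t\<in>{1..T}. \<pi>B t \<in> Pol t" using assms(11) unfolding backward_induction_def by auto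
  show ?thesis
  proof (intro allI impI)
    fix \<pi> assume \<pi>: "\<forall>t\<in>{1..T}. \<pi> t \<in> Pol t"
    have "welfare M d Y S T \<pi> = ipw_value \<pi>" by (rule welfare_eq_ipw_value[OF \<pi>])
    also have "\<dots> \<le> ipw_value \<pi>B" by (rule ipw_value_le_if_pointwise_optimal[OF assms(11) opt \<pi>])
    also have "\<dots> = welfare M d Y S T \<pi>B" by (rule welfare_eq_ipw_value[OF \<pi>B, symmetric])
    finally show "welfare M d Y S T \<pi> \<le> welfare M d Y S T \<pi>B" .
  qed
qed

end
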